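(* For every $n\ge 1$ and every unlabeled binary tree $T\in\mathrm{URL}_n$, \[ \sum_{\sigma \in \mathrm{And}^{I}(T)} s^{\mathrm{ides}(\sigma)} =\sum_{\sigma \in \mathrm{And}^{II}(T)} s^{\mathrm{ides}(\sigma)} =\sum_{\sigma \in \mathrm{RS}(T)} s^{\mathrm{ides}(\sigma)}. \]
   Context: A binary tree is a rooted tree in which every vertex has no child, a single left child, a single right child, or both. The map $\Psi$ sends a word $\pi$ of distinct integers to an increasing binary tree: $\Psi(\emptyset)=\emptyset$; otherwise write $\pi=\sigma\, i\,\tau$ with $i$ the least letter, and let $\Psi(\pi)$ have root $i$, left subtree $\Psi(\sigma)$, right subtree $\Psi(\tau)$. The shape of a labeled tree is its underlying unlabeled binary tree. $\mathrm{URL}_n$ is the set of unlabeled rooted binary trees with $n$ vertices in which no vertex has a left child but no right child. Andr\'e permutations: the empty word and one-letter words are Andr\'e I and Andr\'e II; a word $\sigma$ of $n\ge2$ distinct integers, written $\sigma=\tau\,\min(\sigma)\,\tau'$, is Andr\'e I (resp. II) if $\tau,\tau'$ are Andr\'e I (resp. II) and the largest (resp. smallest) letter of $\tau\tau'$ lies in $\tau'$. A permutation $\sigma$ of $[n]$ is simsun if $\sigma_n=n$ and for each $k\in[n]$ the subword formed by the letters $1,\dots,k$ has no index $i$ with $w_i>w_{i+1}>w_{i+2}$. For $T\in\mathrm{URL}_n$, $\mathrm{And}^{I}(T)$, $\mathrm{And}^{II}(T)$, $\mathrm{RS}(T)$ denote the sets of Andr\'e I, Andr\'e II, and simsun permutations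 $\sigma$ of $[n]$ respectively with $\mathrm{shape}(\Psi(\sigma))=T$. $\mathrm{ides}(\sigma)$ is the number of descents of $\sigma^{-1}$, i.e. the number of $i\in[n-1]$ such that $i+1$ appears to the left of $i$ in $\sigma$. *)

theory Defs
  imports Main "HOL-Library.Tree"
begin

definition wleft :: "nat list \<Rightarrow> nat list" where
  "wleft w = takeWhile (\<lambda>x. x \<noteq> Min (set w)) w"

definition wright :: "nat list \<Rightarrow> nat list" where
  "wright w = tl (dropWhile (\<lambda>x. x \<noteq> Min (set w)) w)"

lemma dw_ne: "w \<noteq> [] \<Longrightarrow> dropWhile (\<lambda>x. x \<noteq> Min (set w)) w \<noteq> []"
  by (simp add: dropWhile_eq_Nil_conv)

lemma wleft_len: "w \<noteq> [] \<Longrightarrow> length (wleft w) < length w"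
proof -
  assume ne: "w \<noteq> []"
  have "length w = length (takeWhile (\<lambda>x. x \<noteq> Min (set w)) w)
      + length (dropWhile (\<lambda>x. x \<noteq> Min (set w)) w)"
    by (metis length_append takeWhile_dropWhile_id)
  then show ?thesis using dw_ne[OF ne] unfolding wleft_def by simp
qed

lemma wright_len: "w \<noteq> [] \<Longrightarrow> length (wright w) < length w"
proof -
  assume ne: "w \<noteq> []"
  have "length (dropWhile (\<lambda>x. x \<noteq> Min (set w)) w) \<le> length w"
    by (rule length_dropWhile_le)
  then show ?thesis using dw_ne[OF ne] unfolding wright_def by (cases w) auto
qed

function Psi :: "nat list \<Rightarrow> nat tree" where
  "Psi w = (if w = [] then Leaf
            else Node (Psi (wleft w)) (Min (set w)) (Psi (wright w)))"
  by auto
termination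
  by (relation "measure length") (auto intro!: wleft_len wright_len)

declare Psi.simps[simp del]

definition shape :: "'a tree \<Rightarrow> unit tree" where
  "shape t = map_tree (\<lambda>_. ()) t"

fun no_left_only :: "unit tree \<Rightarrow> bool" where
  "no_left_only Leaf = True"
| "no_left_only (Node l _ r) =
     (no_left_only l \<and> no_left_only r \<and> (l \<noteq> Leaf \<longrightarrow> r \<noteq> Leaf))"

definition URL :: "nat \<Rightarrow> unit tree set" where
  "URL n = {T. size T = n \<and> no_left_only T}"

function andreI :: "nat list \<Rightarrow> bool" where
  "andreI w = (if length w \<le> 1 then True
     else andreI (wleft w) \<and> andreI (wright w)
          \<and> Max (set (wleft w @ wright w)) \<in> set (wright w))"
  by auto
termination
  by (relation "measure length") (auto intro!: wleft_len wright_len)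

function andreII :: "nat list \<Rightarrow> bool" where
  "andreII w = (if length w \<le> 1 then True
     else andreII (wleft w) \<and> andreII (wright w)
          \<and> Min (set (wleft w @ wright w)) \<in> set (wright w))"
  by auto
termination
  by (relation "measure length") (auto intro!: wleft_len wright_len)

declare andreI.simps[simp del] andreII.simps[simp del]

definition perms :: "nat \<Rightarrow> nat list set" where
  "perms n = {w. distinct w \<and> set w = {1..n}}"

definition no_double_descent :: "nat list \<Rightarrow> bool" where
  "no_double_descent w =
     (\<not> (\<exists>i. i + 2 < length w \<and> w ! i > w ! (i+1) \<and> w ! (i+1) > w ! (i+2)))"

definition simsun :: "nat \<Rightarrow> nat list \<Rightarrow> bool" where
  "simsun n w = (w \<in> perms n \<and> w ! (n - 1) = n \<and>
     (\<forall>k\<in>{1..n}. no_double_descent (filter (\<lambda>x. x \<le> k) w)))"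

definition pos :: "nat list \<Rightarrow> nat \<Rightarrow> nat" where
  "pos w x = (LEAST i. i < length w \<and> w ! i = x)"

definition ides :: "nat \<Rightarrow> nat list \<Rightarrow> nat" where
  "ides n w = card {i \<in> {1..<n}. pos w (i+1) < pos w i}"

definition AndI :: "nat \<Rightarrow> unit tree \<Rightarrow> nat list set" where
  "AndI n T = {w \<in> perms n. andreI w \<and> shape (Psi w) = T}"

definition AndII :: "nat \<Rightarrow> unit tree \<Rightarrow> nat list set" where
  "AndII n T = {w \<in> perms n. andreII w \<and> shape (Psi w) = T}"

definition RS :: "nat \<Rightarrow> unit tree \<Rightarrow> nat list set" where
  "RS n T = {w \<in> perms n. simsun n w \<and> shape (Psi w) = T}"

end

(*
  Split a word with distinct letters as l m r at its least letter m. Its inverse word is the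
  position of m followed by an interleaving of the inverse words of l and of r (shifted), and the
  interleaving pattern records which of the remaining letters, in increasing order, lie in l.
  A word is Andre I, Andre II or simsun iff l and r are of the appropriate kind and the pattern
  ends, resp. starts, resp. ends on the side of r; so along the shape T the three sets of inverse
  words are built by the same grafting recursion with different side conditions.

  The number of descents of a graft depends on the two inverse words only through their descent
  indicator words. Summed over all admissible patterns it depends only on the numbers of descents:
  sliding a block of letters of r across a letter of l is an involution on patterns that exchanges
  two adjacent entries of the descent word of l, and reversing and complementing the pattern
  exchanges the roles of l and r. Reversing the pattern alone turns "starts on the side of r" into
  "ends on the side of r" at the cost of exactly one descent, which the root letter in front
  compensates. Induction on T identifies the three generating functions of inverse descents.
*)
theory Submission
  imports Defs "HOL-Library.Multiset"
begin

section \<open>Interleavings and adjacent pairs\<close>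

fun interleave :: "bool list \<Rightarrow> 'a list \<Rightarrow> 'a list \<Rightarrow> 'a list" where
  "interleave [] xs ys = []"
| "interleave (b # P) xs ys =
     (if b then hd xs # interleave P (tl xs) ys else hd ys # interleave P xs (tl ys))"

definition shuffle_patterns :: "nat \<Rightarrow> nat \<Rightarrow> bool list set" where
  "shuffle_patterns a b = {P. length P = a + b \<and> count_list P True = a}"

lemma count_list_True_False: "count_list P True + count_list P False = length P"
  by (induction P) auto

lemma count_list_replicate_True: "count_list (replicate p True) True = p"
  by (induction p) auto

lemma count_list_replicate_False:
  "count_list (replicate p False) True = 0" "count_list (replicate p False) False = p"
  by (induction p) auto

lemma count_list_map_Not: "count_list (map Not P) b = count_list P (\<not> b)"
  by (induction P) auto

lemma count_list_map_True: "count_list (map p xs) True = length (filter p xs)"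
  by (induction xs) auto

lemma shuffle_patterns_False: "P \<in> shuffle_patterns a b \<Longrightarrow> count_list P False = b"
  using count_list_True_False[of P] by (simp add: shuffle_patterns_def)

lemma shuffle_patterns_nonempty: "P \<in> shuffle_patterns a b \<Longrightarrow> 0 < a + b \<Longrightarrow> P \<noteq> []"
  by (auto simp: shuffle_patterns_def)

lemma finite_shuffle_patterns: "finite (shuffle_patterns a b)"
proof -
  have "shuffle_patterns a b \<subseteq> {P. set P \<subseteq> UNIV \<and> length P = a + b}"
    by (auto simp: shuffle_patterns_def)
  thus ?thesis using finite_lists_length_eq[of "UNIV :: bool set"] finite_subset by auto
qed

lemma rev_shuffle_patterns: "P \<in> shuffle_patterns a b \<Longrightarrow> rev P \<in> shuffle_patterns a b"
  by (simp add: shuffle_patterns_def)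

lemma rev_map_Not_shuffle_patterns:
  "P \<in> shuffle_patterns a b \<Longrightarrow> rev (map Not P) \<in> shuffle_patterns b a"
  using shuffle_patterns_False[of P a b] by (simp add: shuffle_patterns_def count_list_map_Not)

lemma length_interleave: "length (interleave P xs ys) = length P"
  by (induction P arbitrary: xs ys) auto

lemma hd_interleave: "P \<noteq> [] \<Longrightarrow> hd (interleave P xs ys) = (if hd P then hd xs else hd ys)"
  by (cases P) auto

lemma interleave_Not: "interleave (map Not P) xs ys = interleave P ys xs"
  by (induction P arbitrary: xs ys) auto

lemma interleave_append:
  "interleave (P @ Q) xs ys =
     interleave P xs ys @ interleave Q (drop (count_list P True) xs) (drop (count_list P False) ys)"
  by (induction P arbitrary: xs ys) (auto simp: drop_Suc)

lemma interleave_replicate_False: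
  "p \<le> length ys \<Longrightarrow> interleave (replicate p False @ P) xs ys = take p ys @ interleave P xs (drop p ys)"
proof (induction p arbitrary: ys)
  case (Suc p)
  then obtain y ys' where "ys = y # ys'" by (cases ys) auto
  thus ?case using Suc by auto
qed simp

lemma interleave_take:
  "count_list P True \<le> n \<Longrightarrow> count_list P False \<le> m \<Longrightarrow>
     interleave P (take n xs) (take m ys) = interleave P xs ys"
proof (induction P arbitrary: xs ys n m)
  case (Cons b P)
  show ?case
  proof (cases b)
    case True
    then obtain n' where "n = Suc n'" using Cons.prems by (cases n) auto
    thus ?thesis using Cons.IH[of n' m "tl xs" ys] Cons.prems True by (cases xs) (auto simp: tl_take)
  next
    case False
    then obtain m' where "m = Suc m'" using Cons.prems by (cases m) auto
    thus ?thesis using Cons.IH[of n m' xs "tl ys"] Cons.prems False by (cases ys) (auto simp: tl_take)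
  qed
qed simp

lemma set_interleave:
  "count_list P True = length xs \<Longrightarrow> count_list P False = length ys \<Longrightarrow>
     set (interleave P xs ys) = set xs \<union> set ys"
proof (induction P arbitrary: xs ys)
  case (Cons b P)
  thus ?case by (cases b; cases xs; cases ys) auto
qed simp

lemma map_interleave:
  "count_list P True = length xs \<Longrightarrow> count_list P False = length ys \<Longrightarrow>
     map h (interleave P xs ys) = interleave P (map h xs) (map h ys)"
proof (induction P arbitrary: xs ys)
  case (Cons b P)
  thus ?case by (cases b; cases xs; cases ys) auto
qed simp

lemma rev_interleave:
  "count_list P True = length xs \<Longrightarrow> count_list P False = length ys \<Longrightarrow>
     rev (interleave P xs ys) = interleave (rev P) (rev xs) (rev ys)"
proof (induction P arbitrary: xs ys)
  case (Cons b P)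
  show ?case
  proof (cases b)
    case True
    then obtain x xs' where xs: "xs = x # xs'" using Cons.prems by (cases xs) auto
    have "interleave (rev P) (rev xs' @ [x]) (rev ys) = interleave (rev P) (rev xs') (rev ys)"
      using interleave_take[of "rev P" "length xs'" "length ys" "rev xs' @ [x]" "rev ys"]
        Cons.prems True xs by simp
    thus ?thesis using Cons True xs by (simp add: interleave_append)
  next
    case False
    then obtain y ys' where ys: "ys = y # ys'" using Cons.prems by (cases ys) auto
    have "interleave (rev P) (rev xs) (rev ys' @ [y]) = interleave (rev P) (rev xs) (rev ys')"
      using interleave_take[of "rev P" "length xs" "length ys'" "rev xs" "rev ys' @ [y]"]
        Cons.prems False ys by simp
    thus ?thesis using Cons False ys by (simp add: interleave_append)
  qed
qed simp

lemma interleave_separated: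
  "count_list P True = length xs \<Longrightarrow> count_list P False = length ys \<Longrightarrow>
   \<forall>x\<in>set xs. p x \<Longrightarrow> \<forall>y\<in>set ys. \<not> p y \<Longrightarrow>
     filter p (interleave P xs ys) = xs \<and> filter (\<lambda>z. \<not> p z) (interleave P xs ys) = ys \<and>
     map p (interleave P xs ys) = P"
proof (induction P arbitrary: xs ys)
  case (Cons b P)
  thus ?case by (cases b; cases xs; cases ys) auto
qed simp

lemma map_as_interleave:
  "map f zs = interleave (map p zs) (map f (filter p zs)) (map f (filter (\<lambda>x. \<not> p x) zs))"
  by (induction zs) auto

fun count_adj :: "('a \<Rightarrow> 'a \<Rightarrow> bool) \<Rightarrow> 'a list \<Rightarrow> nat" where
  "count_adj c (x # y # xs) = (if c x y then 1 else 0) + count_adj c (y # xs)"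
| "count_adj c _ = 0"

definition adj_pairs :: "'a list \<Rightarrow> ('a \<times> 'a) set" where
  "adj_pairs xs = set (zip xs (tl xs))"

lemma count_adj_Cons:
  "count_adj c (x # xs) = (if xs \<noteq> [] \<and> c x (hd xs) then 1 else 0) + count_adj c xs"
  by (cases xs) auto

lemma count_adj_append:
  "count_adj c (xs @ ys) = count_adj c xs + count_adj c ys +
     (if xs \<noteq> [] \<and> ys \<noteq> [] \<and> c (last xs) (hd ys) then 1 else 0)"
  by (induction xs) (auto simp: count_adj_Cons)

lemma count_adj_rev: "count_adj c (rev xs) = count_adj (\<lambda>x y. c y x) xs"
  by (induction c xs rule: count_adj.induct) (auto simp: count_adj_append)

lemma count_adj_map: "count_adj c (map h xs) = count_adj (\<lambda>x y. c (h x) (h y)) xs"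
  by (induction xs) (auto simp: count_adj_Cons hd_map)

lemma count_adj_disj:
  "(\<And>x y. \<not> (A x y \<and> B x y)) \<Longrightarrow> count_adj (\<lambda>x y. A x y \<or> B x y) xs = count_adj A xs + count_adj B xs"
  by (induction xs) (auto simp: count_adj_Cons)

lemma adj_pairs_Cons: "adj_pairs (x # xs) = (if xs = [] then {} else insert (x, hd xs) (adj_pairs xs))"
  unfolding adj_pairs_def by (cases xs) auto

lemma count_adj_cong:
  "(\<And>x y. (x, y) \<in> adj_pairs xs \<Longrightarrow> c x y = c' x y) \<Longrightarrow> count_adj c xs = count_adj c' xs"
  by (induction c xs rule: count_adj.induct) (auto simp: adj_pairs_Cons)

lemma count_adj_cong_set:
  "(\<And>x y. x \<in> set xs \<Longrightarrow> c x y = c' x y) \<Longrightarrow> count_adj c xs = count_adj c' xs"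
  by (induction xs) (auto simp: count_adj_Cons)

lemma adj_pairs_subset: "(x, y) \<in> adj_pairs xs \<Longrightarrow> x \<in> set xs \<and> y \<in> set xs"
  unfolding adj_pairs_def by (auto dest: set_zip_leftD set_zip_rightD list.set_sel(2)[rotated] intro: list.set_sel(2))

lemma adj_pairs_filter: "(x, y) \<in> adj_pairs xs \<Longrightarrow> p x \<Longrightarrow> p y \<Longrightarrow> (x, y) \<in> adj_pairs (filter p xs)"
proof (induction xs)
  case (Cons z xs)
  show ?case
  proof (cases "(x, y) = (z, hd xs) \<and> xs \<noteq> []")
    case True
    then obtain xs' where "xs = y # xs'" by (cases xs) auto
    thus ?thesis using True Cons.prems by (simp add: adj_pairs_Cons)
  next
    case False
    hence "(x, y) \<in> adj_pairs (filter p xs)" using Cons by (auto simp: adj_pairs_Cons split: if_splits)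
    moreover have "adj_pairs (filter p xs) \<subseteq> adj_pairs (z # filter p xs)"
      by (cases "filter p xs") (auto simp: adj_pairs_Cons adj_pairs_def)
    ultimately show ?thesis by auto
  qed
qed (simp add: adj_pairs_def)

lemma adj_pairs_map: "adj_pairs (map h xs) = (\<lambda>(x, y). (h x, h y)) ` adj_pairs xs"
  unfolding adj_pairs_def by (simp add: map_tl[symmetric] zip_map_map)

lemma adj_pairs_upt: "(i, j) \<in> adj_pairs [0..<a] \<Longrightarrow> j = Suc i \<and> j < a"
  unfolding adj_pairs_def by (auto simp: set_zip tl_upt)

lemma count_adj_first_last:
  "P \<noteq> [] \<Longrightarrow> count_adj (\<lambda>x y. \<not> x \<and> y) P + (if hd P then 1 else 0) =
     count_adj (\<lambda>x y. x \<and> \<not> y) P + (if last P then 1 else 0)"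
proof (induction P)
  case (Cons b P)
  thus ?case by (cases P) auto
qed simp

section \<open>Descents of interleavings\<close>

definition merged_idx :: "bool list \<Rightarrow> nat \<Rightarrow> nat \<Rightarrow> (nat + nat) list" where
  "merged_idx P a b = interleave P (map Inl [0..<a]) (map Inr [0..<b])"

text \<open>Let every letter of a word \<open>u\<close> be smaller than every letter of a word \<open>v\<close>, with descent
  indicator words \<open>du\<close> and \<open>dv\<close>. In an interleaving of \<open>u\<close> and \<open>v\<close>, two adjacent letters of
  \<open>u\<close> are consecutive in \<open>u\<close>, so form a descent iff \<open>du\<close> says so (only the first index is read);
  a letter of \<open>v\<close> followed by one of \<open>u\<close> is always a descent, the converse never.\<close>

fun merged_descent :: "bool list \<Rightarrow> bool list \<Rightarrow> nat + nat \<Rightarrow> nat + nat \<Rightarrow> bool" where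
  "merged_descent du dv (Inl i) (Inl j) = du ! i"
| "merged_descent du dv (Inr i) (Inr j) = dv ! i"
| "merged_descent du dv (Inr i) (Inl j) = True"
| "merged_descent du dv (Inl i) (Inr j) = False"

lemma merged_idx_fits:
  "P \<in> shuffle_patterns a b \<Longrightarrow> count_list P True = length (map Inl [0..<a] :: (nat + nat) list) \<and>
     count_list P False = length (map Inr [0..<b] :: (nat + nat) list)"
  using shuffle_patterns_False[of P a b] by (simp add: shuffle_patterns_def)

lemma set_merged_idx:
  "P \<in> shuffle_patterns a b \<Longrightarrow> set (merged_idx P a b) = Inl ` {0..<a} \<union> Inr ` {0..<b}"
  unfolding merged_idx_def by (subst set_interleave) (auto dest: merged_idx_fits)

lemma map_isl_merged_idx:
  assumes "P \<in> shuffle_patterns a b"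
  shows "map isl (merged_idx P a b) = P"
proof -
  have fits: "count_list P True = length (map Inl [0..<a] :: (nat + nat) list)"
    "count_list P False = length (map Inr [0..<b] :: (nat + nat) list)"
    using merged_idx_fits[OF assms] by auto
  show ?thesis unfolding merged_idx_def using interleave_separated[OF fits, of isl] by auto
qed

lemma adj_pairs_merged_idx:
  assumes P: "P \<in> shuffle_patterns a b"
  shows "(Inl i, Inl j) \<in> adj_pairs (merged_idx P a b) \<Longrightarrow> j = Suc i \<and> j < a"
    and "(Inr i, Inr j) \<in> adj_pairs (merged_idx P a b) \<Longrightarrow> j = Suc i \<and> j < b"
proof -
  have fits: "count_list P True = length (map Inl [0..<a] :: (nat + nat) list)"
    "count_list P False = length (map Inr [0..<b] :: (nat + nat) list)"
    using merged_idx_fits[OF P] by auto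
  have fl: "filter isl (merged_idx P a b) = map Inl [0..<a]"
    and fr: "filter (\<lambda>z. \<not> isl z) (merged_idx P a b) = map Inr [0..<b]"
    unfolding merged_idx_def using interleave_separated[OF fits, of isl] by auto
  show "j = Suc i \<and> j < a" if "(Inl i, Inl j) \<in> adj_pairs (merged_idx P a b)"
  proof -
    have "(Inl i, Inl j) \<in> adj_pairs (map Inl [0..<a] :: (nat + nat) list)"
      using adj_pairs_filter[OF that, of isl] fl by simp
    thus ?thesis unfolding adj_pairs_map by (auto dest: adj_pairs_upt)
  qed
  show "j = Suc i \<and> j < b" if "(Inr i, Inr j) \<in> adj_pairs (merged_idx P a b)"
  proof -
    have "(Inr i, Inr j) \<in> adj_pairs (map Inr [0..<b] :: (nat + nat) list)"
      using adj_pairs_filter[OF that, of "\<lambda>z. \<not> isl z"] fr by simp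
    thus ?thesis unfolding adj_pairs_map by (auto dest: adj_pairs_upt)
  qed
qed

lemma count_adj_merged_descent_Inr:
  assumes "set X \<subseteq> range Inr"
  shows "count_adj (merged_descent du dv) X = count_adj (merged_descent du' dv) X"
proof (rule count_adj_cong_set)
  fix x y assume "x \<in> set X"
  then obtain i where "x = Inr i" using assms by auto
  thus "merged_descent du dv x y = merged_descent du' dv x y" by (cases y) auto
qed

lemma count_adj_merged_descent_gap:
  assumes "set X \<subseteq> range Inr"
  shows "count_adj (merged_descent du dv) (Inl i # X @ Inl j # R) =
    (if X = [] then (if du ! i then 1 else 0) else Suc (count_adj (merged_descent du dv) X)) +
    count_adj (merged_descent du dv) (Inl j # R)"
proof (cases "X = []")
  case False
  have "hd X \<in> range Inr" "last X \<in> range Inr" using False assms by auto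
  thus ?thesis using False by (auto simp: count_adj_Cons count_adj_append)
qed simp

definition swap_adj :: "nat \<Rightarrow> 'a list \<Rightarrow> 'a list" where
  "swap_adj k xs = xs[k := xs ! Suc k, Suc k := xs ! k]"

lemma swap_adj_append: "swap_adj (length xs) (xs @ x # y # ys) = xs @ y # x # ys"
  unfolding swap_adj_def by (simp add: list_update_append nth_append)

lemma count_adj_swap_adj_unread:
  fixes xs :: "(nat + nat) list"
  assumes "Inl k \<notin> set xs" "Inl (Suc k) \<notin> set xs"
  shows "count_adj (merged_descent (swap_adj k du) dv) xs = count_adj (merged_descent du dv) xs"
proof -
  have "merged_descent (swap_adj k du) dv x y = merged_descent du dv x y"
    if "x \<noteq> Inl k" "x \<noteq> Inl (Suc k)" for x y
    using that by (cases x; cases y) (auto simp: swap_adj_def nth_list_update)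
  thus ?thesis using assms by (intro count_adj_cong_set) metis
qed

text \<open>The two blocks of right letters in the gaps after the left letters \<open>k\<close> and \<open>k + 1\<close>
  may be exchanged, when one of them is empty, at the price of exchanging \<open>du ! k\<close> and
  \<open>du ! (k + 1)\<close>; when both are nonempty these two entries are not read at all.\<close>

lemma count_adj_slide_blocks:
  assumes A: "set A \<subseteq> range Inr" and B: "set B \<subseteq> range Inr"
    and R: "Inl k \<notin> set (Inl j # R)" "Inl (Suc k) \<notin> set (Inl j # R)" and k: "Suc k < length du"
  shows "count_adj (merged_descent du dv) (Inl k # A @ Inl (Suc k) # B @ Inl j # R) =
    count_adj (merged_descent (swap_adj k du) dv)
      (if A = [] \<or> B = [] then Inl k # B @ Inl (Suc k) # A @ Inl j # R
       else Inl k # A @ Inl (Suc k) # B @ Inl j # R)"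
proof -
  let ?c = "merged_descent du dv" and ?c' = "merged_descent (swap_adj k du) dv"
  let ?gap = "\<lambda>X b. if X = [] then (if b then 1 else 0) else Suc (count_adj ?c X)"
  have sw: "swap_adj k du ! k = du ! Suc k" "swap_adj k du ! Suc k = du ! k"
    using k by (auto simp: swap_adj_def nth_list_update)
  have tail: "count_adj ?c' (Inl j # R) = count_adj ?c (Inl j # R)"
    using R by (rule count_adj_swap_adj_unread)
  have blocks: "count_adj ?c' A = count_adj ?c A" "count_adj ?c' B = count_adj ?c B"
    using A B count_adj_merged_descent_Inr by metis+
  have "count_adj ?c (Inl k # A @ Inl (Suc k) # B @ Inl j # R) =
      ?gap A (du ! k) + (?gap B (du ! Suc k) + count_adj ?c (Inl j # R))"
    using count_adj_merged_descent_gap[OF A, of du dv k "Suc k" "B @ Inl j # R"]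
      count_adj_merged_descent_gap[OF B, of du dv "Suc k" j R] by (simp only:)
  moreover have "count_adj ?c' (Inl k # B @ Inl (Suc k) # A @ Inl j # R) =
      ?gap B (du ! Suc k) + (?gap A (du ! k) + count_adj ?c (Inl j # R))"
    using count_adj_merged_descent_gap[OF B, of "swap_adj k du" dv k "Suc k" "A @ Inl j # R"]
      count_adj_merged_descent_gap[OF A, of "swap_adj k du" dv "Suc k" j R]
    by (simp only: sw tail blocks)
  moreover have "count_adj ?c' (Inl k # A @ Inl (Suc k) # B @ Inl j # R) =
      ?gap A (du ! Suc k) + (?gap B (du ! k) + count_adj ?c (Inl j # R))"
    using count_adj_merged_descent_gap[OF A, of "swap_adj k du" dv k "Suc k" "B @ Inl j # R"]
      count_adj_merged_descent_gap[OF B, of "swap_adj k du" dv "Suc k" j R]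
    by (simp only: sw tail blocks)
  ultimately show ?thesis by auto
qed

text \<open>On a pattern \<open>F\<^sup>p T F\<^sup>q T Y\<close> the block of \<open>False\<close>s before the first \<open>True\<close> and the
  one between the first two \<open>True\<close>s are exchanged when one of them is empty.\<close>

definition slide_block :: "bool list \<Rightarrow> bool list" where
  "slide_block Q = (let p = length (takeWhile Not Q); Q' = tl (dropWhile Not Q);
     q = length (takeWhile Not Q'); Y = dropWhile Not Q' in
     if (p = 0 \<or> q = 0) \<and> Y \<noteq> [] then replicate q False @ True # replicate p False @ Y else Q)"

lemma takeWhile_Not_replicate: "takeWhile Not (replicate p False @ True # Y) = replicate p False"
  by (induction p) auto

lemma dropWhile_Not_replicate: "dropWhile Not (replicate p False @ True # Y) = True # Y"
  by (induction p) auto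

lemma slide_block_blocks:
  "slide_block (replicate p False @ True # replicate q False @ True # Y) =
    (if p = 0 \<or> q = 0 then replicate q False @ True # replicate p False @ True # Y
     else replicate p False @ True # replicate q False @ True # Y)"
  by (simp add: slide_block_def Let_def takeWhile_Not_replicate dropWhile_Not_replicate)

lemma two_True_blocks:
  assumes "2 \<le> count_list Q True"
  obtains p q Y where "Q = replicate p False @ True # replicate q False @ True # Y"
proof -
  have first_True: "\<exists>p R. xs = replicate p False @ True # R" if T: "True \<in> set xs" for xs
  proof -
    obtain ys R where "xs = ys @ True # R" "True \<notin> set ys"
      using split_list_first[OF T] by blast
    moreover have "replicate (length ys) False = ys"
      using \<open>True \<notin> set ys\<close> by (intro replicate_length_same) auto
    ultimately show ?thesis by metis
  qed
  obtain p R where Q: "Q = replicate p False @ True # R"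
    using first_True assms by (metis count_notin not_numeral_le_zero)
  have "1 \<le> count_list R True" using assms Q by (simp add: count_list_replicate_False)
  hence "True \<in> set R" by (metis count_notin not_one_le_zero)
  then obtain q Y where "R = replicate q False @ True # Y" using first_True by blast
  thus ?thesis using Q that by blast
qed

lemma slide_block_props:
  assumes "2 \<le> count_list Q True"
  shows "length (slide_block Q) = length Q" "count_list (slide_block Q) b = count_list Q b"
    "slide_block (slide_block Q) = Q" "last (slide_block Q) = last Q"
proof -
  obtain p q Y where Q: "Q = replicate p False @ True # replicate q False @ True # Y"
    using two_True_blocks[OF assms] by blast
  show "length (slide_block Q) = length Q" "count_list (slide_block Q) b = count_list Q b"
    "slide_block (slide_block Q) = Q" "last (slide_block Q) = last Q"
    by (simp_all add: Q slide_block_blocks count_list_replicate_False)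
qed

lemma interleave_slide_block:
  assumes Q: "Q = replicate p False @ True # replicate q False @ True # Y" and pq: "p + q \<le> length ys"
  shows "interleave (True # Q) (x1 # x2 # x3 # xs) ys =
      x1 # take p ys @ x2 # take q (drop p ys) @ x3 # interleave Y xs (drop (p + q) ys)"
    and "interleave (True # slide_block Q) (x1 # x2 # x3 # xs) ys =
      (if p = 0 \<or> q = 0 then x1 # take q (drop p ys) @ x2 # take p ys @ x3 # interleave Y xs (drop (p + q) ys)
       else interleave (True # Q) (x1 # x2 # x3 # xs) ys)"
proof -
  have blocks: "interleave (True # replicate p' False @ True # replicate q' False @ True # Y) (x1 # x2 # x3 # xs) ys =
      x1 # take p' ys @ x2 # take q' (drop p' ys) @ x3 # interleave Y xs (drop (p' + q') ys)"
    if "p' + q' \<le> length ys" for p' q'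
    using that by (simp add: interleave_replicate_False add.commute)
  show "interleave (True # Q) (x1 # x2 # x3 # xs) ys =
      x1 # take p ys @ x2 # take q (drop p ys) @ x3 # interleave Y xs (drop (p + q) ys)"
    unfolding Q using blocks[OF pq] .
  show "interleave (True # slide_block Q) (x1 # x2 # x3 # xs) ys =
      (if p = 0 \<or> q = 0 then x1 # take q (drop p ys) @ x2 # take p ys @ x3 # interleave Y xs (drop (p + q) ys)
       else interleave (True # Q) (x1 # x2 # x3 # xs) ys)"
    using blocks[of q p] pq by (auto simp: Q slide_block_blocks add.commute)
qed

lemma count_adj_slide_block:
  fixes rest vs :: "nat list"
  assumes Q: "count_list Q True = Suc (Suc (length rest))" "count_list Q False = length vs"
    and k: "Suc k < length du" "k \<notin> set (j # rest)" "Suc k \<notin> set (j # rest)"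
  shows "count_adj (merged_descent du dv)
      (interleave (True # slide_block Q) (map Inl (k # Suc k # j # rest)) (map Inr vs)) =
    count_adj (merged_descent (swap_adj k du) dv)
      (interleave (True # Q) (map Inl (k # Suc k # j # rest)) (map Inr vs))"
proof -
  have "2 \<le> count_list Q True" using Q(1) by simp
  then obtain p q Y where QY: "Q = replicate p False @ True # replicate q False @ True # Y"
    by (rule two_True_blocks)
  let ?V = "map Inr vs :: (nat + nat) list"
  define A B R where "A = take p ?V" and "B = take q (drop p ?V)"
    and "R = interleave Y (map Inl rest) (drop (p + q) ?V)"
  have pq: "p + q \<le> length ?V" using Q(2) QY by (simp add: count_list_replicate_False)
  have Y: "count_list Y True = length (map Inl rest :: (nat + nat) list)"
    "count_list Y False = length (drop (p + q) ?V)"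
    using Q QY by (auto simp: count_list_replicate_False)
  have R: "Inl k \<notin> set (Inl j # R)" "Inl (Suc k) \<notin> set (Inl j # R)"
    using k set_interleave[OF Y] by (auto simp: R_def dest: in_set_dropD)
  have AB: "set A \<subseteq> range Inr" "set B \<subseteq> range Inr" "A = [] \<longleftrightarrow> p = 0" "B = [] \<longleftrightarrow> q = 0"
    using pq by (auto simp: A_def B_def dest!: in_set_takeD in_set_dropD)
  have "interleave (True # Q) (map Inl (k # Suc k # j # rest)) ?V = Inl k # A @ Inl (Suc k) # B @ Inl j # R"
    "interleave (True # slide_block Q) (map Inl (k # Suc k # j # rest)) ?V =
      (if A = [] \<or> B = [] then Inl k # B @ Inl (Suc k) # A @ Inl j # R else Inl k # A @ Inl (Suc k) # B @ Inl j # R)"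
    unfolding list.map interleave_slide_block[OF QY pq] AB(3,4) by (simp_all add: A_def B_def R_def)
  thus ?thesis
    using count_adj_slide_blocks[OF AB(1) AB(2) R k(1), of dv] count_adj_slide_blocks[OF AB(2) AB(1) R k(1), of dv]
    by (cases "A = [] \<or> B = []") auto
qed

text \<open>\<open>slide_block_at i\<close> slides the blocks in the gaps after the left letters \<open>i\<close> and
  \<open>i + 1\<close>.\<close>

fun slide_block_at :: "nat \<Rightarrow> bool list \<Rightarrow> bool list" where
  "slide_block_at i [] = []"
| "slide_block_at i (False # P) = False # slide_block_at i P"
| "slide_block_at 0 (True # P) = True # slide_block P"
| "slide_block_at (Suc i) (True # P) = True # slide_block_at i P"

lemma slide_block_at_props:
  "i + 3 \<le> count_list P True \<Longrightarrow>
   length (slide_block_at i P) = length P \<and>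
   (\<forall>b. count_list (slide_block_at i P) b = count_list P b) \<and>
   slide_block_at i (slide_block_at i P) = P \<and> last (slide_block_at i P) = last P \<and>
   hd (slide_block_at i P) = hd P \<and> slide_block_at i P \<noteq> []"
proof (induction i P rule: slide_block_at.induct)
  case (2 i P)
  hence "P \<noteq> []" by (cases P) auto
  thus ?case using 2 by auto
next
  case (3 P)
  hence c: "2 \<le> count_list P True" by simp
  hence "P \<noteq> []" by (cases P) auto
  moreover have "slide_block P \<noteq> []" using slide_block_props(1)[OF c] \<open>P \<noteq> []\<close> by auto
  ultimately show ?case using slide_block_props[OF c] by auto
next
  case (4 i P)
  hence "P \<noteq> []" by (cases P) auto
  thus ?case using 4 by auto
qed simp

lemma interleave_slide_block_at_hd:
  assumes "i + 3 \<le> count_list P True"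
  shows "interleave (slide_block_at i P) xs ys \<noteq> [] \<and> interleave P xs ys \<noteq> [] \<and>
    hd (interleave (slide_block_at i P) xs ys) = hd (interleave P xs ys)"
proof -
  have "P \<noteq> []" using assms by (cases P) auto
  thus ?thesis using slide_block_at_props[OF assms]
    by (auto simp: hd_interleave length_interleave simp flip: length_greater_0_conv)
qed

lemma count_adj_slide_block_at:
  "count_list P True = length us \<Longrightarrow> count_list P False = length vs \<Longrightarrow>
   us = [k..<e] \<Longrightarrow> k + i + 2 < e \<Longrightarrow> Suc (k + i) < length du \<Longrightarrow>
   count_adj (merged_descent du dv) (interleave (slide_block_at i P) (map Inl us) (map Inr vs)) =
   count_adj (merged_descent (swap_adj (k + i) du) dv) (interleave P (map Inl us) (map Inr vs))"
proof (induction i P arbitrary: us vs k rule: slide_block_at.induct)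
  case (2 i P)
  then obtain v vs' where vs: "vs = v # vs'" by (cases vs) auto
  have P: "i + 3 \<le> count_list P True" using 2 by simp
  have "count_adj (merged_descent du dv) (interleave (slide_block_at i P) (map Inl us) (map Inr vs')) =
     count_adj (merged_descent (swap_adj (k + i) du) dv) (interleave P (map Inl us) (map Inr vs'))"
    using 2 vs by auto
  moreover note interleave_slide_block_at_hd[OF P, of "map Inl us" "map Inr vs'"]
  moreover have "merged_descent (swap_adj (k + i) du) dv (Inr v) x = merged_descent du dv (Inr v) x" for x
    by (cases x) auto
  ultimately show ?case using vs by (simp add: count_adj_Cons)
next
  case (3 P)
  then obtain rest where us: "us = k # Suc k # Suc (Suc k) # rest" and rest: "rest = [Suc (Suc (Suc k))..<e]"
    by (simp add: upt_conv_Cons)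
  have "count_adj (merged_descent du dv)
      (interleave (True # slide_block P) (map Inl (k # Suc k # Suc (Suc k) # rest)) (map Inr vs)) =
    count_adj (merged_descent (swap_adj k du) dv)
      (interleave (True # P) (map Inl (k # Suc k # Suc (Suc k) # rest)) (map Inr vs))"
    by (rule count_adj_slide_block) (use 3 us rest in auto)
  thus ?case using us by simp
next
  case (4 i P)
  obtain us' where us: "us = k # us'" and us': "us' = [Suc k..<e]"
    using 4 by (simp add: upt_conv_Cons)
  have P: "i + 3 \<le> count_list P True" using 4 by simp
  have "count_adj (merged_descent du dv) (interleave (slide_block_at i P) (map Inl us') (map Inr vs)) =
     count_adj (merged_descent (swap_adj (Suc k + i) du) dv) (interleave P (map Inl us') (map Inr vs))"
    by (rule "4.IH") (use 4 us us' in auto)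
  moreover note interleave_slide_block_at_hd[OF P, of "map Inl us'" "map Inr vs"]
  moreover have "merged_descent (swap_adj (k + Suc i) du) dv (Inl k) x = merged_descent du dv (Inl k) x" for x
    by (cases x) (auto simp: swap_adj_def nth_list_update)
  ultimately show ?case using us by (simp add: count_adj_Cons)
qed simp

definition ends_sum :: "bool \<Rightarrow> bool \<Rightarrow> nat \<Rightarrow> nat \<Rightarrow> bool list \<Rightarrow> bool list \<Rightarrow>
    (nat \<Rightarrow> 'b::comm_monoid_add) \<Rightarrow> 'b" where
  "ends_sum x y a b du dv g =
     (\<Sum>P\<in>{P \<in> shuffle_patterns a b. hd P = x \<and> last P = y}.
        g (count_adj (merged_descent du dv) (merged_idx P a b)))"

lemma ends_sum_swap_adj:
  assumes "i + 2 < a" "Suc i < length du"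
  shows "ends_sum x y a b du dv g = ends_sum x y a b (swap_adj i du) dv g"
proof -
  let ?S = "{P \<in> shuffle_patterns a b. hd P = x \<and> last P = y}"
  have "slide_block_at i (slide_block_at i P) = P \<and> slide_block_at i P \<in> ?S \<and>
     g (count_adj (merged_descent (swap_adj i du) dv) (merged_idx (slide_block_at i P) a b)) =
     g (count_adj (merged_descent du dv) (merged_idx P a b))" if P: "P \<in> ?S" for P
  proof -
    have c: "i + 3 \<le> count_list P True" using assms P by (auto simp: shuffle_patterns_def)
    have "count_adj (merged_descent du dv) (merged_idx (slide_block_at i (slide_block_at i P)) a b) =
      count_adj (merged_descent (swap_adj (0 + i) du) dv) (merged_idx (slide_block_at i P) a b)"
      unfolding merged_idx_def
      by (rule count_adj_slide_block_at)
        (use slide_block_at_props[OF c] P shuffle_patterns_False[of P a b] assms in \<open>auto simp: shuffle_patterns_def\<close>)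
    thus ?thesis using slide_block_at_props[OF c] P by (auto simp: shuffle_patterns_def)
  qed
  thus ?thesis unfolding ends_sum_def
    by (intro sum.reindex_bij_witness[where i = "slide_block_at i" and j = "slide_block_at i"]) auto
qed

lemma sort_invariant_insort:
  assumes "\<And>xs x y ys. length (xs @ x # y # ys) = n \<Longrightarrow> F (xs @ x # y # ys) = F (xs @ y # x # ys)"
    and "length (x # zs) = n"
  shows "F (x # zs) = F (insort x zs)"
  using assms
proof (induction zs arbitrary: F n)
  case (Cons z zs)
  show ?case
  proof (cases "x \<le> z")
    case False
    have "F (x # z # zs) = F (z # x # zs)" using Cons.prems(1)[of "[]" x z zs] Cons.prems(2) by simp
    also have "\<dots> = F (z # insort x zs)"
      using Cons.IH[where F = "\<lambda>l. F (z # l)" and n = "n - 1"] Cons.prems(1)[of "z # _"] Cons.prems(2)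
      by auto
    finally show ?thesis using False by simp
  qed simp
qed simp

lemma sort_invariant:
  assumes "\<And>xs x y ys. length (xs @ x # y # ys) = n \<Longrightarrow> F (xs @ x # y # ys) = F (xs @ y # x # ys)"
    and "length zs = n"
  shows "F zs = F (sort zs)"
  using assms
proof (induction zs arbitrary: F n)
  case (Cons x zs)
  have "F (x # zs) = F (x # sort zs)"
    using Cons.IH[where F = "\<lambda>l. F (x # l)" and n = "n - 1"] Cons.prems(1)[of "x # _"] Cons.prems(2)
    by auto
  also have "\<dots> = F (insort x (sort zs))"
    by (rule sort_invariant_insort[where n = n]) (use Cons.prems in auto)
  finally show ?case by simp
qed simp

lemma sort_bool_list_eq:
  fixes xs ys :: "bool list"
  assumes "length xs = length ys" "count_list xs True = count_list ys True"
  shows "sort xs = sort ys"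
proof -
  have "count_list xs b = count_list ys b" for b
    using assms count_list_True_False[of xs] count_list_True_False[of ys] by (cases b) simp_all
  hence "mset xs = mset ys" by (simp add: multiset_eq_iff count_mset)
  thus ?thesis by (metis sorted_list_of_multiset_mset)
qed

lemma ends_sum_count_left:
  assumes "length du = a - 1" "length du' = a - 1" "count_list du True = count_list du' True"
  shows "ends_sum x y a b du dv g = ends_sum x y a b du' dv g"
proof -
  have swap: "ends_sum x y a b (xs @ u # u' # ys) dv g = ends_sum x y a b (xs @ u' # u # ys) dv g"
    if "length (xs @ u # u' # ys) = a - 1" for xs u u' ys
  proof -
    have "length xs + 2 < a" "Suc (length xs) < length (xs @ u # u' # ys)" using that by auto
    thus ?thesis using ends_sum_swap_adj[of "length xs" a "xs @ u # u' # ys" x y b dv g]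
      by (simp add: swap_adj_append)
  qed
  have "ends_sum x y a b du dv g = ends_sum x y a b (sort du) dv g"
    using sort_invariant[where F = "\<lambda>l. ends_sum x y a b l dv g", OF swap assms(1)] by simp
  also have "\<dots> = ends_sum x y a b du' dv g"
    using sort_invariant[where F = "\<lambda>l. ends_sum x y a b l dv g", OF swap assms(2)]
      sort_bool_list_eq[of du du'] assms by simp
  finally show ?thesis .
qed

definition flip_idx :: "nat \<Rightarrow> nat \<Rightarrow> nat + nat \<Rightarrow> nat + nat" where
  "flip_idx a b = map_sum (\<lambda>i. a - 1 - i) (\<lambda>j. b - 1 - j)"

lemma merged_idx_rev:
  assumes P: "P \<in> shuffle_patterns a b"
  shows "merged_idx (rev P) a b = rev (map (flip_idx a b) (merged_idx P a b))"
proof -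
  have fits: "count_list P True = length (map Inl [0..<a] :: (nat + nat) list)"
    "count_list P False = length (map Inr [0..<b] :: (nat + nat) list)"
    using merged_idx_fits[OF P] by auto
  have "rev (map (flip_idx a b) (merged_idx P a b)) =
    interleave (rev P) (rev (map (flip_idx a b) (map Inl [0..<a]))) (rev (map (flip_idx a b) (map Inr [0..<b])))"
    using fits unfolding merged_idx_def by (simp add: map_interleave rev_interleave)
  also have "rev (map (flip_idx a b) (map Inl [0..<a])) = map Inl [0..<a]"
    by (rule nth_equalityI) (auto simp: rev_nth flip_idx_def)
  also have "rev (map (flip_idx a b) (map Inr [0..<b])) = map Inr [0..<b]"
    by (rule nth_equalityI) (auto simp: rev_nth flip_idx_def)
  finally show ?thesis by (simp add: merged_idx_def)
qed

lemma merged_idx_mirror: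
  assumes P: "P \<in> shuffle_patterns a b"
  shows "merged_idx (rev (map Not P)) b a = rev (map (case_sum Inr Inl \<circ> flip_idx a b) (merged_idx P a b))"
proof -
  have fits: "count_list (rev P) True = length (map Inl [0..<a] :: (nat + nat) list)"
    "count_list (rev P) False = length (map Inr [0..<b] :: (nat + nat) list)"
    using merged_idx_fits[OF rev_shuffle_patterns[OF P]] by auto
  have "merged_idx (rev (map Not P)) b a = map (case_sum Inr Inl) (merged_idx (rev P) a b)"
    unfolding merged_idx_def using map_interleave[OF fits, of "case_sum Inr Inl"]
    by (simp add: rev_map interleave_Not comp_def)
  thus ?thesis by (simp add: merged_idx_rev[OF P] rev_map)
qed

lemma merged_descent_flip_idx:
  assumes P: "P \<in> shuffle_patterns a b" and xy: "(x, y) \<in> adj_pairs (merged_idx P a b)"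
    and du: "length du = a - 1" and dv: "length dv = b - 1"
  shows "merged_descent (rev du) (rev dv) (flip_idx a b y) (flip_idx a b x) =
    (if isl x = isl y then merged_descent du dv x y else isl x)"
proof -
  have rev_nth_gap: "rev xs ! (n - Suc (Suc i)) = xs ! i"
    if "length xs = n - 1" "Suc i < n" for xs :: "bool list" and n i
  proof -
    have "n - Suc (Suc i) < length xs" "length xs - Suc (n - Suc (Suc i)) = i" using that by auto
    thus ?thesis by (simp add: rev_nth)
  qed
  show ?thesis
    using xy du dv by (cases x; cases y) (auto simp: flip_idx_def rev_nth_gap dest: adj_pairs_merged_idx[OF P])
qed

lemma count_adj_mirror:
  assumes P: "P \<in> shuffle_patterns a b" and du: "length du = a - 1" and dv: "length dv = b - 1"
  shows "count_adj (merged_descent (rev dv) (rev du)) (merged_idx (rev (map Not P)) b a) =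
    count_adj (merged_descent du dv) (merged_idx P a b)"
proof -
  let ?h = "case_sum Inr Inl \<circ> flip_idx a b"
  have "count_adj (merged_descent (rev dv) (rev du)) (merged_idx (rev (map Not P)) b a) =
      count_adj (\<lambda>x y. merged_descent (rev dv) (rev du) (?h y) (?h x)) (merged_idx P a b)"
    by (simp add: merged_idx_mirror[OF P] count_adj_rev count_adj_map)
  also have "\<dots> = count_adj (merged_descent du dv) (merged_idx P a b)"
  proof (rule count_adj_cong)
    fix x y assume "(x, y) \<in> adj_pairs (merged_idx P a b)"
    from merged_descent_flip_idx[OF P this du dv]
    show "merged_descent (rev dv) (rev du) (?h y) (?h x) = merged_descent du dv x y"
      by (cases x; cases y) (simp_all add: flip_idx_def)
  qed
  finally show ?thesis .
qed

text \<open>Reversing the pattern keeps the descents inside each side but exchanges the right-to-left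
  steps (always descents) with the left-to-right ones (never); a pattern running from right to left
  has one more step of the first kind.\<close>

lemma count_adj_rev_pattern:
  assumes P: "P \<in> shuffle_patterns a b" and du: "length du = a - 1" and dv: "length dv = b - 1"
    and ends: "P \<noteq> []" "hd P = False" "last P = True"
  shows "count_adj (merged_descent du dv) (merged_idx P a b) =
    Suc (count_adj (merged_descent (rev du) (rev dv)) (merged_idx (rev P) a b))"
proof -
  let ?M = "merged_idx P a b" and ?same = "\<lambda>x y. isl x = isl y \<and> merged_descent du dv x y"
  have split: "count_adj (\<lambda>x y. ?same x y \<or> (isl x \<noteq> isl y \<and> isl y = b)) ?M =
      count_adj ?same ?M + count_adj (\<lambda>x y. x = (\<not> b) \<and> y = b) (map isl ?M)" for b
    unfolding count_adj_map by (subst count_adj_disj) (auto intro!: arg_cong2[where f = "(+)"] count_adj_cong_set)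
  have "count_adj (merged_descent (rev du) (rev dv)) (merged_idx (rev P) a b) =
      count_adj (\<lambda>x y. ?same x y \<or> (isl x \<noteq> isl y \<and> isl y = False)) ?M"
    unfolding merged_idx_rev[OF P] count_adj_rev count_adj_map
  proof (rule count_adj_cong)
    fix x y assume "(x, y) \<in> adj_pairs ?M"
    from merged_descent_flip_idx[OF P this du dv]
    show "merged_descent (rev du) (rev dv) (flip_idx a b y) (flip_idx a b x) =
        (?same x y \<or> (isl x \<noteq> isl y \<and> isl y = False))"
      by (cases x; cases y) simp_all
  qed
  moreover have "count_adj (merged_descent du dv) ?M =
      count_adj (\<lambda>x y. ?same x y \<or> (isl x \<noteq> isl y \<and> isl y = True)) ?M"
  proof (rule count_adj_cong_set)
    fix x y show "merged_descent du dv x y = (?same x y \<or> (isl x \<noteq> isl y \<and> isl y = True))"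
      by (cases x; cases y) auto
  qed
  ultimately show ?thesis
    using split[of True] split[of False] count_adj_first_last[OF ends(1)] ends map_isl_merged_idx[OF P]
    by simp
qed

lemma ends_sum_mirror:
  assumes ab: "0 < a + b" and du: "length du = a - 1" and dv: "length dv = b - 1"
  shows "ends_sum x y a b du dv g = ends_sum (\<not> y) (\<not> x) b a (rev dv) (rev du) g"
  unfolding ends_sum_def
proof (rule sum.reindex_bij_witness[where i = "\<lambda>P. rev (map Not P)" and j = "\<lambda>P. rev (map Not P)"])
  fix P assume P: "P \<in> {P \<in> shuffle_patterns a b. hd P = x \<and> last P = y}"
  hence "P \<noteq> []" using ab shuffle_patterns_nonempty by blast
  thus "rev (map Not (rev (map Not P))) = P"
    "rev (map Not P) \<in> {P \<in> shuffle_patterns b a. hd P = (\<not> y) \<and> last P = (\<not> x)}"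
    "g (count_adj (merged_descent (rev dv) (rev du)) (merged_idx (rev (map Not P)) b a)) =
     g (count_adj (merged_descent du dv) (merged_idx P a b))"
    using P rev_map_Not_shuffle_patterns[of P a b] count_adj_mirror[of P a b du dv] du dv
    by (auto simp: rev_map comp_def hd_rev last_rev hd_map last_map)
next
  fix P assume P: "P \<in> {P \<in> shuffle_patterns b a. hd P = (\<not> y) \<and> last P = (\<not> x)}"
  hence "P \<noteq> []" using ab shuffle_patterns_nonempty[of P b a] by auto
  thus "rev (map Not (rev (map Not P))) = P"
    "rev (map Not P) \<in> {P \<in> shuffle_patterns a b. hd P = x \<and> last P = y}"
    using P rev_map_Not_shuffle_patterns[of P b a] by (auto simp: rev_map comp_def hd_rev last_rev hd_map last_map)
qed

lemma ends_sum_rev: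
  assumes ab: "0 < a + b" and du: "length du = a - 1" and dv: "length dv = b - 1"
  shows "ends_sum False True a b du dv g = ends_sum True False a b (rev du) (rev dv) (\<lambda>w. g (Suc w))"
  unfolding ends_sum_def
proof (rule sum.reindex_bij_witness[where i = rev and j = rev])
  fix P assume P: "P \<in> {P \<in> shuffle_patterns a b. hd P = False \<and> last P = True}"
  hence "P \<noteq> []" using ab shuffle_patterns_nonempty by blast
  thus "rev (rev P) = P" "rev P \<in> {P \<in> shuffle_patterns a b. hd P = True \<and> last P = False}"
    "g (Suc (count_adj (merged_descent (rev du) (rev dv)) (merged_idx (rev P) a b))) =
     g (count_adj (merged_descent du dv) (merged_idx P a b))"
    using P rev_shuffle_patterns[of P a b] count_adj_rev_pattern[of P a b du dv] du dv
    by (auto simp: hd_rev last_rev)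
next
  fix P assume P: "P \<in> {P \<in> shuffle_patterns a b. hd P = True \<and> last P = False}"
  hence "P \<noteq> []" using ab shuffle_patterns_nonempty by blast
  thus "rev (rev P) = P" "rev P \<in> {P \<in> shuffle_patterns a b. hd P = False \<and> last P = True}"
    using P rev_shuffle_patterns[of P a b] by (auto simp: hd_rev last_rev)
qed

lemma ends_sum_count:
  assumes ab: "0 < a + b"
    and du: "length du = a - 1" "length du' = a - 1" "count_list du True = count_list du' True"
    and dv: "length dv = b - 1" "length dv' = b - 1" "count_list dv True = count_list dv' True"
  shows "ends_sum x y a b du dv g = ends_sum x y a b du' dv' g"
proof -
  have "ends_sum x y a b du dv g = ends_sum x y a b du' dv g"
    by (rule ends_sum_count_left) (use du in auto)
  also have "\<dots> = ends_sum (\<not> y) (\<not> x) b a (rev dv) (rev du') g"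
    by (rule ends_sum_mirror) (use ab du dv in auto)
  also have "\<dots> = ends_sum (\<not> y) (\<not> x) b a (rev dv') (rev du') g"
    by (rule ends_sum_count_left) (use dv in auto)
  also have "\<dots> = ends_sum x y a b du' dv' g"
    using ends_sum_mirror[of b a "rev dv'" "rev du'" "\<not> y" "\<not> x" g] ab du dv
    by (simp add: add.commute)
  finally show ?thesis .
qed

definition last_right :: "bool list \<Rightarrow> bool" where
  "last_right P \<longleftrightarrow> P = [] \<or> \<not> last P"

definition first_right :: "bool list \<Rightarrow> bool" where
  "first_right P \<longleftrightarrow> P = [] \<or> \<not> hd P"

text \<open>The summand \<open>hd P\<close> is the descent from a root letter placed in front of the interleaving,
  larger than the left letters and smaller than the right ones.\<close>

definition pattern_sum :: "(bool list \<Rightarrow> bool) \<Rightarrow> nat \<Rightarrow> nat \<Rightarrow> bool list \<Rightarrow> bool list \<Rightarrow>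
    (nat \<Rightarrow> 'b::comm_monoid_add) \<Rightarrow> 'b" where
  "pattern_sum C a b du dv f =
     (\<Sum>P\<in>{P \<in> shuffle_patterns a b. C P}.
        f ((if P \<noteq> [] \<and> hd P then 1 else 0) + count_adj (merged_descent du dv) (merged_idx P a b)))"

lemma pattern_sum_ends:
  assumes ab: "0 < a + b"
  shows "pattern_sum first_right a b du dv f = ends_sum False False a b du dv f + ends_sum False True a b du dv f"
    "pattern_sum last_right a b du dv f =
      ends_sum False False a b du dv f + ends_sum True False a b du dv (\<lambda>w. f (Suc w))"
proof -
  let ?S = "\<lambda>x y. {P \<in> shuffle_patterns a b. hd P = x \<and> last P = y}"
  let ?g = "\<lambda>P. f ((if P \<noteq> [] \<and> hd P then 1 else 0) + count_adj (merged_descent du dv) (merged_idx P a b))"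
  have fin: "finite (?S x y)" for x y using finite_shuffle_patterns by auto
  have sum_S: "sum ?g (?S x y) = ends_sum x y a b du dv (\<lambda>w. f ((if x then 1 else 0) + w))" for x y
    unfolding ends_sum_def using shuffle_patterns_nonempty[OF _ ab] by (intro sum.cong) auto
  have "{P \<in> shuffle_patterns a b. first_right P} = ?S False False \<union> ?S False True"
    "{P \<in> shuffle_patterns a b. last_right P} = ?S False False \<union> ?S True False"
    using shuffle_patterns_nonempty[OF _ ab] by (auto simp: first_right_def last_right_def)
  hence ps: "pattern_sum first_right a b du dv f = sum ?g (?S False False \<union> ?S False True)"
    "pattern_sum last_right a b du dv f = sum ?g (?S False False \<union> ?S True False)"
    unfolding pattern_sum_def by simp_all
  have "sum ?g (?S False False \<union> ?S False True) = sum ?g (?S False False) + sum ?g (?S False True)"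
    "sum ?g (?S False False \<union> ?S True False) = sum ?g (?S False False) + sum ?g (?S True False)"
    by (intro sum.union_disjoint fin; auto)+
  thus "pattern_sum first_right a b du dv f = ends_sum False False a b du dv f + ends_sum False True a b du dv f"
    "pattern_sum last_right a b du dv f =
      ends_sum False False a b du dv f + ends_sum True False a b du dv (\<lambda>w. f (Suc w))"
    unfolding ps sum_S by simp_all
qed

lemma pattern_sum_first_right_last_right:
  assumes du: "length du = a - 1" and dv: "length dv = b - 1"
  shows "pattern_sum first_right a b du dv f = pattern_sum last_right a b du dv f"
proof (cases "0 < a + b")
  case True
  have "ends_sum False True a b du dv f = ends_sum True False a b (rev du) (rev dv) (\<lambda>w. f (Suc w))"
    by (rule ends_sum_rev) (use True du dv in auto)
  also have "\<dots> = ends_sum True False a b du dv (\<lambda>w. f (Suc w))"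
    by (rule ends_sum_count) (use True du dv in auto)
  finally show ?thesis by (simp add: pattern_sum_ends[OF True])
next
  case False
  hence "{P \<in> shuffle_patterns a b. first_right P} = {P \<in> shuffle_patterns a b. last_right P}"
    by (auto simp: shuffle_patterns_def first_right_def last_right_def)
  thus ?thesis unfolding pattern_sum_def by simp
qed

lemma pattern_sum_last_right_count:
  assumes du: "length du = a - 1" "length du' = a - 1" "count_list du True = count_list du' True"
    and dv: "length dv = b - 1" "length dv' = b - 1" "count_list dv True = count_list dv' True"
  shows "pattern_sum last_right a b du dv f = pattern_sum last_right a b du' dv' f"
proof (cases "0 < a + b")
  case True
  have "ends_sum x y a b du dv g = ends_sum x y a b du' dv' g" for x y and g :: "nat \<Rightarrow> 'a"
    by (rule ends_sum_count) (use True assms in auto)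
  thus ?thesis by (simp add: pattern_sum_ends[OF True])
next
  case False
  hence "du = []" "du' = []" "dv = []" "dv' = []" using du dv by auto
  thus ?thesis by simp
qed

section \<open>Descents of grafted words\<close>

fun descent_word :: "nat list \<Rightarrow> bool list" where
  "descent_word (x # y # r) = (y < x) # descent_word (y # r)"
| "descent_word _ = []"

definition des :: "nat list \<Rightarrow> nat" where
  "des xs = count_adj (\<lambda>x y. y < x) xs"

lemma length_descent_word: "length (descent_word u) = length u - 1"
  by (induction u rule: descent_word.induct) auto

lemma count_descent_word: "count_list (descent_word u) True = des u"
  unfolding des_def by (induction u rule: descent_word.induct) auto

lemma nth_descent_word: "Suc i < length u \<Longrightarrow> descent_word u ! i = (u ! Suc i < u ! i)"
proof (induction u arbitrary: i rule: descent_word.induct)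
  case (1 x y r) thus ?case by (cases i) auto
qed auto

lemma descent_word_shift: "descent_word (map (\<lambda>x. x + c) v) = descent_word v"
  by (induction v rule: descent_word.induct) auto

lemma des_le_length: "des u \<le> length u - 1"
  using count_descent_word[of u] length_descent_word[of u] count_le_length[of "descent_word u" True]
  by simp

definition perms0 :: "nat \<Rightarrow> nat list set" where
  "perms0 n = {t. distinct t \<and> set t = {0..<n}}"

lemma length_perms0: "t \<in> perms0 n \<Longrightarrow> length t = n"
  unfolding perms0_def using distinct_card[of t] by auto

lemma des_interleave:
  assumes P: "P \<in> shuffle_patterns a b" and u: "length u = a" and v: "length v = b"
    and lt: "\<And>x y. x \<in> set u \<Longrightarrow> y \<in> set v \<Longrightarrow> x < y"
  shows "des (interleave P u v) = count_adj (merged_descent (descent_word u) (descent_word v)) (merged_idx P a b)"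
proof -
  let ?h = "case_sum (\<lambda>i. u ! i) (\<lambda>j. v ! j)"
  have fits: "count_list P True = length (map Inl [0..<a] :: (nat + nat) list)"
    "count_list P False = length (map Inr [0..<b] :: (nat + nat) list)"
    using merged_idx_fits[OF P] by auto
  have "interleave P u v = map ?h (merged_idx P a b)"
    unfolding merged_idx_def map_interleave[OF fits] using u v map_nth[of u] map_nth[of v]
    by (simp add: comp_def)
  hence "des (interleave P u v) = count_adj (\<lambda>x y. ?h y < ?h x) (merged_idx P a b)"
    by (simp add: des_def count_adj_map)
  also have "\<dots> = count_adj (merged_descent (descent_word u) (descent_word v)) (merged_idx P a b)"
  proof (rule count_adj_cong)
    fix x y assume xy: "(x, y) \<in> adj_pairs (merged_idx P a b)"
    have range: "x \<in> Inl ` {0..<a} \<union> Inr ` {0..<b}" "y \<in> Inl ` {0..<a} \<union> Inr ` {0..<b}"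
      using adj_pairs_subset[OF xy] set_merged_idx[OF P] by simp_all
    show "(?h y < ?h x) = merged_descent (descent_word u) (descent_word v) x y"
    proof (cases x; cases y)
      fix i j assume "x = Inl i" "y = Inl j"
      thus ?thesis using adj_pairs_merged_idx(1)[OF P] xy u by (simp add: nth_descent_word)
    next
      fix i j assume "x = Inr i" "y = Inr j"
      thus ?thesis using adj_pairs_merged_idx(2)[OF P] xy v by (simp add: nth_descent_word)
    next
      fix i j assume ij: "x = Inl i" "y = Inr j"
      hence "i < a" "j < b" using range by auto
      thus ?thesis using ij u v lt[of "u ! i" "v ! j"] by simp
    next
      fix i j assume ij: "x = Inr i" "y = Inl j"
      hence "j < a" "i < b" using range by auto
      thus ?thesis using ij u v lt[of "u ! j" "v ! i"] by simp
    qed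
  qed
  finally show ?thesis .
qed

text \<open>By \<open>inverse_word_split\<close>, the inverse word of \<open>l @ m # r\<close> with least letter \<open>m\<close> is the graft
  of the inverse words of \<open>l\<close> and \<open>r\<close> along the pattern \<open>split_pattern l r\<close>.\<close>

definition graft :: "(bool list \<Rightarrow> bool) \<Rightarrow> nat list set \<Rightarrow> nat list set \<Rightarrow> nat \<Rightarrow> nat \<Rightarrow> nat list set" where
  "graft C EL ER a b = (\<lambda>(u, v, P). a # interleave P u (map (\<lambda>x. x + Suc a) v)) `
     (EL \<times> ER \<times> {P \<in> shuffle_patterns a b. C P})"

lemma graft_elem_perms0:
  assumes u: "u \<in> perms0 a" and v: "v \<in> perms0 b" and P: "P \<in> shuffle_patterns a b"
  shows "a # interleave P u (map (\<lambda>x. x + Suc a) v) \<in> perms0 (Suc (a + b))"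
proof -
  let ?t = "a # interleave P u (map (\<lambda>x. x + Suc a) v)"
  have fits: "count_list P True = length u" "count_list P False = length (map (\<lambda>x. x + Suc a) v)"
    using P length_perms0[OF u] length_perms0[OF v] shuffle_patterns_False[OF P]
    by (auto simp: shuffle_patterns_def)
  have "set (map (\<lambda>x. x + Suc a) v) = (\<lambda>x. x + Suc a) ` {0..<b}"
    using v by (simp add: perms0_def)
  also have "\<dots> = {Suc a..<Suc (a + b)}"
    by (simp only: image_add_atLeastLessThan') (simp add: ac_simps)
  finally have s: "set ?t = {0..<Suc (a + b)}"
    using set_interleave[OF fits] u by (auto simp: perms0_def)
  have "length ?t = Suc (a + b)" using P by (simp add: length_interleave shuffle_patterns_def)
  hence "distinct ?t" using s by (intro card_distinct) simp
  thus ?thesis using s by (simp add: perms0_def)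
qed

lemma graft_perms0:
  assumes "EL \<subseteq> perms0 a" "ER \<subseteq> perms0 b"
  shows "graft C EL ER a b \<subseteq> perms0 (Suc (a + b))"
proof (unfold graft_def, rule image_subsetI, clarify)
  fix u v P assume "u \<in> EL" "v \<in> ER" "P \<in> shuffle_patterns a b"
  thus "a # interleave P u (map (\<lambda>x. x + Suc a) v) \<in> perms0 (Suc (a + b))"
    using assms by (intro graft_elem_perms0) auto
qed

lemma finite_graft: "finite EL \<Longrightarrow> finite ER \<Longrightarrow> finite (graft C EL ER a b)"
  unfolding graft_def using finite_shuffle_patterns by auto

lemma inj_on_graft:
  assumes "EL \<subseteq> perms0 a" "ER \<subseteq> perms0 b"
  shows "inj_on (\<lambda>(u, v, P). a # interleave P u (map (\<lambda>x. x + Suc a) v)) (EL \<times> ER \<times> {P \<in> shuffle_patterns a b. C P})"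
proof -
  have recover: "filter (\<lambda>x. x < a) t = u \<and> filter (\<lambda>x. \<not> x < a) t = map (\<lambda>x. x + Suc a) v \<and>
      map (\<lambda>x. x < a) t = P"
    if "t = interleave P u (map (\<lambda>x. x + Suc a) v)" "u \<in> perms0 a" "v \<in> perms0 b" "P \<in> shuffle_patterns a b"
    for t u v P
  proof -
    have "count_list P True = length u" "count_list P False = length (map (\<lambda>x. x + Suc a) v)"
      using that length_perms0 shuffle_patterns_False by (auto simp: shuffle_patterns_def)
    moreover have "\<forall>x\<in>set u. x < a" "\<forall>y\<in>set (map (\<lambda>x. x + Suc a) v). \<not> y < a"
      using that by (auto simp: perms0_def)
    ultimately show ?thesis using that(1) interleave_separated by blast
  qed
  show ?thesis
  proof (rule inj_onI)
    fix x y
    assume x: "x \<in> EL \<times> ER \<times> {P \<in> shuffle_patterns a b. C P}" and y: "y \<in> EL \<times> ER \<times> {P \<in> shuffle_patterns a b. C P}"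
      and eq: "(\<lambda>(u, v, P). a # interleave P u (map (\<lambda>x. x + Suc a) v)) x =
        (\<lambda>(u, v, P). a # interleave P u (map (\<lambda>x. x + Suc a) v)) y"
    obtain u v P u' v' P' where xy: "x = (u, v, P)" "y = (u', v', P')" by (cases x, cases y) auto
    have mem: "u \<in> perms0 a" "v \<in> perms0 b" "P \<in> shuffle_patterns a b"
      "u' \<in> perms0 a" "v' \<in> perms0 b" "P' \<in> shuffle_patterns a b"
      using x y assms xy by auto
    have t: "interleave P u (map (\<lambda>x. x + Suc a) v) = interleave P' u' (map (\<lambda>x. x + Suc a) v')"
      using eq xy by simp
    have "u = u'" "P = P'" "map (\<lambda>x. x + Suc a) v = map (\<lambda>x. x + Suc a) v'"
      using recover[OF refl mem(1-3)] recover[OF refl mem(4-6)] unfolding t by auto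
    moreover from this(3) have "v = v'" by (simp add: inj_map_eq_map inj_on_def)
    ultimately show "x = y" using xy by simp
  qed
qed

lemma sum_graft:
  assumes "EL \<subseteq> perms0 a" "ER \<subseteq> perms0 b"
  shows "(\<Sum>t\<in>graft C EL ER a b. h t) =
    (\<Sum>u\<in>EL. \<Sum>v\<in>ER. \<Sum>P\<in>{P \<in> shuffle_patterns a b. C P}. h (a # interleave P u (map (\<lambda>x. x + Suc a) v)))"
  unfolding graft_def sum.reindex[OF inj_on_graft[OF assms]]
  by (simp add: sum.cartesian_product case_prod_unfold)

lemma des_graft:
  assumes u: "u \<in> perms0 a" and v: "v \<in> perms0 b" and P: "P \<in> shuffle_patterns a b"
  shows "des (a # interleave P u (map (\<lambda>x. x + Suc a) v)) =
    (if P \<noteq> [] \<and> hd P then 1 else 0) + count_adj (merged_descent (descent_word u) (descent_word v)) (merged_idx P a b)"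
proof -
  let ?v = "map (\<lambda>x. x + Suc a) v"
  have lu: "length u = a" and lv: "length ?v = b" using length_perms0[OF u] length_perms0[OF v] by auto
  have fits: "count_list P True = length u" "count_list P False = length ?v"
    using P lu lv shuffle_patterns_False[OF P] by (auto simp: shuffle_patterns_def)
  have "x < y" if "x \<in> set u" "y \<in> set ?v" for x y using that u v by (auto simp: perms0_def)
  hence "des (interleave P u ?v) = count_adj (merged_descent (descent_word u) (descent_word v)) (merged_idx P a b)"
    using des_interleave[OF P lu lv] descent_word_shift[of "Suc a" v] by simp
  moreover have "interleave P u ?v \<noteq> [] \<and> hd (interleave P u ?v) < a \<longleftrightarrow> P \<noteq> [] \<and> hd P"
  proof (cases P)
    case (Cons p P')
    show ?thesis
    proof (cases p)
      case True
      hence "u \<noteq> []" using fits Cons by auto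
      thus ?thesis using u Cons True by (auto simp: perms0_def)
    next
      case False
      hence "v \<noteq> []" using fits Cons by auto
      thus ?thesis using Cons False by (cases v) auto
    qed
  qed simp
  ultimately show ?thesis by (simp add: des_def count_adj_Cons)
qed

definition canonical_word :: "nat \<Rightarrow> nat \<Rightarrow> bool list" where
  "canonical_word n d = replicate d True @ replicate (n - d) False"

definition graft_weight :: "nat \<Rightarrow> nat \<Rightarrow> nat \<Rightarrow> nat \<Rightarrow> (nat \<Rightarrow> 'b::comm_monoid_add) \<Rightarrow> 'b" where
  "graft_weight a b d d' f = pattern_sum last_right a b (canonical_word (a - 1) d) (canonical_word (b - 1) d') f"

lemma pattern_sum_graft_weight:
  assumes u: "u \<in> perms0 a" and v: "v \<in> perms0 b" and C: "C = first_right \<or> C = last_right"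
  shows "pattern_sum C a b (descent_word u) (descent_word v) f = graft_weight a b (des u) (des v) f"
proof -
  have canonical: "length (canonical_word (length w - 1) (des w)) = length w - 1 \<and>
      count_list (canonical_word (length w - 1) (des w)) True = des w" for w
    using des_le_length[of w] by (simp add: canonical_word_def count_list_replicate_True count_list_replicate_False)
  have "pattern_sum last_right a b (descent_word u) (descent_word v) f = graft_weight a b (des u) (des v) f"
    unfolding graft_weight_def using canonical[of u] canonical[of v] length_perms0[OF u] length_perms0[OF v]
    by (intro pattern_sum_last_right_count) (auto simp: length_descent_word count_descent_word)
  moreover have "pattern_sum first_right a b (descent_word u) (descent_word v) f =
      pattern_sum last_right a b (descent_word u) (descent_word v) f"
    using length_perms0[OF u] length_perms0[OF v]
    by (intro pattern_sum_first_right_last_right) (auto simp: length_descent_word)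
  ultimately show ?thesis using C by auto
qed

lemma sum_des_graft:
  assumes "finite EL" "finite ER" "EL \<subseteq> perms0 a" "ER \<subseteq> perms0 b" "C = first_right \<or> C = last_right"
  shows "(\<Sum>t\<in>graft C EL ER a b. f (des t)) = (\<Sum>u\<in>EL. \<Sum>v\<in>ER. graft_weight a b (des u) (des v) f)"
proof -
  have "(\<Sum>t\<in>graft C EL ER a b. f (des t)) =
      (\<Sum>u\<in>EL. \<Sum>v\<in>ER. pattern_sum C a b (descent_word u) (descent_word v) f)"
    unfolding sum_graft[OF assms(3,4)] pattern_sum_def using assms(3,4)
    by (intro sum.cong refl arg_cong[where f = f] des_graft) auto
  also have "\<dots> = (\<Sum>u\<in>EL. \<Sum>v\<in>ER. graft_weight a b (des u) (des v) f)"
    using assms(3-5) by (intro sum.cong refl pattern_sum_graft_weight) auto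
  finally show ?thesis .
qed

fun inv_words :: "(bool list \<Rightarrow> bool) \<Rightarrow> unit tree \<Rightarrow> nat list set" where
  "inv_words C Leaf = {[]}"
| "inv_words C (Node L x R) = graft C (inv_words C L) (inv_words C R) (size L) (size R)"

fun inv_words_simsun :: "unit tree \<Rightarrow> nat list set" where
  "inv_words_simsun Leaf = {[]}"
| "inv_words_simsun (Node L x R) =
     graft last_right (inv_words first_right L) (inv_words_simsun R) (size L) (size R)"

lemma inv_words_perms0: "inv_words C T \<subseteq> perms0 (size T) \<and> finite (inv_words C T)"
proof (induction T)
  case (Node L x R)
  thus ?case using graft_perms0[of "inv_words C L" "size L" "inv_words C R" "size R" C] finite_graft
    by simp
qed (simp add: perms0_def)

lemma inv_words_simsun_perms0: "inv_words_simsun T \<subseteq> perms0 (size T) \<and> finite (inv_words_simsun T)"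
proof (induction T)
  case (Node L x R)
  thus ?case using graft_perms0[of "inv_words first_right L" "size L" "inv_words_simsun R" "size R"]
      inv_words_perms0[of first_right L] finite_graft
    by simp
qed (simp add: perms0_def)

lemma sum_des_inv_words:
  fixes f :: "nat \<Rightarrow> 'b::comm_monoid_add"
  shows "(\<Sum>t\<in>inv_words last_right T. f (des t)) = (\<Sum>t\<in>inv_words first_right T. f (des t)) \<and>
    (\<Sum>t\<in>inv_words_simsun T. f (des t)) = (\<Sum>t\<in>inv_words first_right T. f (des t))"
proof (induction T arbitrary: f)
  case (Node L x R)
  let ?w = "graft_weight (size L) (size R)"
  have "(\<Sum>t\<in>inv_words C (Node L x R). f (des t)) =
      (\<Sum>u\<in>inv_words C L. \<Sum>v\<in>inv_words C R. ?w (des u) (des v) f)"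
    if "C = first_right \<or> C = last_right" for C
    using inv_words_perms0[of C L] inv_words_perms0[of C R] that by (simp add: sum_des_graft)
  moreover have "(\<Sum>t\<in>inv_words_simsun (Node L x R). f (des t)) =
      (\<Sum>u\<in>inv_words first_right L. \<Sum>v\<in>inv_words_simsun R. ?w (des u) (des v) f)"
    using inv_words_perms0[of first_right L] inv_words_simsun_perms0[of R] by (simp add: sum_des_graft)
  moreover have "(\<Sum>v\<in>inv_words last_right R. ?w d (des v) f) = (\<Sum>v\<in>inv_words first_right R. ?w d (des v) f)"
    "(\<Sum>v\<in>inv_words_simsun R. ?w d (des v) f) = (\<Sum>v\<in>inv_words first_right R. ?w d (des v) f)" for d
    using Node.IH(2)[of "\<lambda>e. ?w d e f"] by simp_all
  moreover have "(\<Sum>u\<in>inv_words last_right L. \<Sum>v\<in>inv_words first_right R. ?w (des u) (des v) f) =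
      (\<Sum>u\<in>inv_words first_right L. \<Sum>v\<in>inv_words first_right R. ?w (des u) (des v) f)"
    using Node.IH(1)[of "\<lambda>d. \<Sum>v\<in>inv_words first_right R. ?w d (des v) f"] by blast
  ultimately show ?case by simp
qed simp

section \<open>Inverse words and the decomposition at the least letter\<close>

lemma pos_nth: "distinct xs \<Longrightarrow> i < length xs \<Longrightarrow> pos xs (xs ! i) = i"
  unfolding pos_def by (rule Least_equality) (auto simp: nth_eq_iff_index_eq)

lemma nth_pos: "x \<in> set xs \<Longrightarrow> xs ! pos xs x = x"
  unfolding pos_def by (rule LeastI2_ex) (auto simp: in_set_conv_nth)

lemma pos_append_Cons:
  assumes d: "distinct (l @ m # r)"
  shows "x \<in> set l \<Longrightarrow> pos (l @ m # r) x = pos l x"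
    and "pos (l @ m # r) m = length l"
    and "x \<in> set r \<Longrightarrow> pos (l @ m # r) x = Suc (length l + pos r x)"
proof -
  show "pos (l @ m # r) x = pos l x" if "x \<in> set l"
  proof -
    obtain i where i: "i < length l" "x = l ! i" using \<open>x \<in> set l\<close> by (auto simp: in_set_conv_nth)
    thus ?thesis using pos_nth[OF d, of i] pos_nth[of l i] d by (simp add: nth_append)
  qed
  show "pos (l @ m # r) m = length l"
    using pos_nth[OF d, of "length l"] by simp
  show "pos (l @ m # r) x = Suc (length l + pos r x)" if "x \<in> set r"
  proof -
    obtain i where i: "i < length r" "x = r ! i" using \<open>x \<in> set r\<close> by (auto simp: in_set_conv_nth)
    thus ?thesis using pos_nth[OF d, of "Suc (length l + i)"] pos_nth[of r i] d by (simp add: nth_append)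
  qed
qed

text \<open>For a permutation this is the inverse permutation in one-line notation, with values counted
  from \<open>0\<close>.\<close>

definition inverse_word :: "nat list \<Rightarrow> nat list" where
  "inverse_word w = map (pos w) (sort w)"

definition split_pattern :: "nat list \<Rightarrow> nat list \<Rightarrow> bool list" where
  "split_pattern l r = map (\<lambda>x. x \<in> set l) (sort (l @ r))"

lemma sort_distinct: "distinct w \<Longrightarrow> sort w = sorted_list_of_set (set w)"
  by (simp add: sorted_list_of_set_sort_remdups distinct_remdups_id)

lemma sort_append_Cons_min:
  assumes d: "distinct (l @ m # r)" and lt: "\<forall>x\<in>set l \<union> set r. m < x"
  shows "sort (l @ m # r) = m # sort (l @ r)"
proof -
  have "Min (set (l @ m # r)) = m" using lt by (intro Min_eqI) (auto intro: less_imp_le)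
  moreover have "set (l @ m # r) - {m} = set (l @ r)" using d by auto
  ultimately show ?thesis
    using d sorted_list_of_set_nonempty[of "set (l @ m # r)"] by (simp add: sort_distinct)
qed

lemma inverse_word_split:
  assumes d: "distinct (l @ m # r)" and lt: "\<forall>x\<in>set l \<union> set r. m < x"
  shows "inverse_word (l @ m # r) =
    length l # interleave (split_pattern l r) (inverse_word l) (map (\<lambda>x. x + Suc (length l)) (inverse_word r))"
proof -
  let ?w = "l @ m # r" and ?p = "\<lambda>x. x \<in> set l"
  have "filter ?p (l @ r) = l" "filter (\<lambda>x. \<not> ?p x) (l @ r) = r"
    using d by (auto intro: filter_True filter_False)
  hence "filter ?p (sort (l @ r)) = sort l" "filter (\<lambda>x. \<not> ?p x) (sort (l @ r)) = sort r"
    by (simp_all add: filter_sort)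
  hence "map (pos ?w) (sort (l @ r)) =
      interleave (split_pattern l r) (map (pos ?w) (sort l)) (map (pos ?w) (sort r))"
    unfolding split_pattern_def using map_as_interleave[of "pos ?w" "sort (l @ r)" ?p] by simp
  also have "map (pos ?w) (sort l) = inverse_word l"
    unfolding inverse_word_def by (rule map_cong) (auto simp: pos_append_Cons(1)[OF d])
  also have "map (pos ?w) (sort r) = map (\<lambda>x. x + Suc (length l)) (inverse_word r)"
    unfolding inverse_word_def by (simp add: pos_append_Cons(3)[OF d])
  finally show ?thesis
    unfolding inverse_word_def sort_append_Cons_min[OF d lt] by (simp add: pos_append_Cons(2)[OF d])
qed

lemma split_pattern_shuffle_patterns:
  assumes "distinct (l @ r)"
  shows "split_pattern l r \<in> shuffle_patterns (length l) (length r)"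
proof -
  have "filter (\<lambda>x. x \<in> set l) (l @ r) = l" using assms by (auto intro: filter_True filter_False)
  hence "count_list (split_pattern l r) True = length l"
    unfolding split_pattern_def by (simp add: count_list_map_True filter_sort)
  thus ?thesis by (simp add: shuffle_patterns_def split_pattern_def)
qed

lemma inverse_word_inj:
  assumes d: "distinct w" "distinct w'" and s: "set w = set w'" and eq: "inverse_word w = inverse_word w'"
  shows "w = w'"
proof (rule nth_equalityI)
  show len: "length w = length w'" using d s by (metis distinct_card)
  fix i assume i: "i < length w"
  have "sort w = sort w'" using d s by (simp add: sort_distinct)
  hence "pos w x = pos w' x" if "x \<in> set w" for x
    using eq that s by (auto simp: inverse_word_def map_eq_conv)
  hence "pos w' (w ! i) = i" using pos_nth[OF d(1) i] i by simp
  thus "w ! i = w' ! i" using nth_pos[of "w ! i" w'] s i by (metis nth_mem)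
qed

lemma word_split_Min: "w \<noteq> [] \<Longrightarrow> w = wleft w @ Min (set w) # wright w"
proof -
  assume ne: "w \<noteq> []"
  let ?m = "Min (set w)"
  have "dropWhile (\<lambda>x. x \<noteq> ?m) w \<noteq> []" by (rule dw_ne[OF ne])
  moreover have "hd (dropWhile (\<lambda>x. x \<noteq> ?m) w) = ?m"
    using hd_dropWhile[OF calculation] by simp
  ultimately have "dropWhile (\<lambda>x. x \<noteq> ?m) w = ?m # wright w"
    unfolding wright_def by (cases "dropWhile (\<lambda>x. x \<noteq> ?m) w") auto
  thus ?thesis unfolding wleft_def by (metis takeWhile_dropWhile_id)
qed

lemma word_split_Min_less:
  assumes d: "distinct w" and ne: "w \<noteq> []"
  shows "\<forall>x\<in>set (wleft w) \<union> set (wright w). Min (set w) < x"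
proof -
  have dist: "distinct (wleft w @ Min (set w) # wright w)" using d word_split_Min[OF ne] by metis
  have sub: "set (wleft w) \<union> set (wright w) \<subseteq> set w"
    by (subst (3) word_split_Min[OF ne]) auto
  show ?thesis
  proof
    fix x assume x: "x \<in> set (wleft w) \<union> set (wright w)"
    hence "Min (set w) \<le> x" using sub by auto
    moreover have "x \<noteq> Min (set w)" using dist x by auto
    ultimately show "Min (set w) < x" by simp
  qed
qed

lemma wleft_wright_append_Cons:
  assumes d: "distinct (l @ m # r)" and lt: "\<forall>x\<in>set l \<union> set r. m < x"
  shows "Min (set (l @ m # r)) = m" "wleft (l @ m # r) = l" "wright (l @ m # r) = r"
proof -
  show m: "Min (set (l @ m # r)) = m" using lt by (intro Min_eqI) (auto intro: less_imp_le)
  have "\<forall>x\<in>set l. x \<noteq> m" using d by auto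
  thus "wleft (l @ m # r) = l" "wright (l @ m # r) = r"
    unfolding wleft_def wright_def m by (simp_all add: takeWhile_append dropWhile_append)
qed

lemma shape_Psi_Nil: "shape (Psi []) = Leaf"
  by (simp add: Psi.simps shape_def)

lemma shape_Psi_Cons:
  "w \<noteq> [] \<Longrightarrow> shape (Psi w) = Node (shape (Psi (wleft w))) () (shape (Psi (wright w)))"
  by (subst Psi.simps) (simp add: shape_def)

lemma size_shape_Psi: "size (shape (Psi w)) = length w"
proof (induction w rule: Psi.induct)
  case (1 w)
  show ?case
  proof (cases "w = []")
    case False
    hence "length w = length (wleft w) + Suc (length (wright w))"
      by (subst word_split_Min[OF False]) simp
    thus ?thesis using 1 False by (simp add: shape_Psi_Cons)
  qed (simp add: shape_Psi_Nil)
qed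

lemma shape_Psi_eq_Leaf: "shape (Psi w) = Leaf \<longleftrightarrow> w = []"
  using size_shape_Psi[of w] by (cases w) (auto simp: shape_Psi_Nil)

lemma andreI_append_Cons:
  assumes d: "distinct (l @ m # r)" and lt: "\<forall>x\<in>set l \<union> set r. m < x"
  shows "andreI (l @ m # r) \<longleftrightarrow> andreI l \<and> andreI r \<and> (l @ r \<noteq> [] \<longrightarrow> Max (set (l @ r)) \<in> set r)"
proof (cases "l = [] \<and> r = []")
  case True thus ?thesis by (simp add: andreI.simps)
next
  case False thus ?thesis by (subst andreI.simps) (simp add: wleft_wright_append_Cons[OF d lt])
qed

lemma andreII_append_Cons:
  assumes d: "distinct (l @ m # r)" and lt: "\<forall>x\<in>set l \<union> set r. m < x"
  shows "andreII (l @ m # r) \<longleftrightarrow> andreII l \<and> andreII r \<and> (l @ r \<noteq> [] \<longrightarrow> Min (set (l @ r)) \<in> set r)"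
proof (cases "l = [] \<and> r = []")
  case True thus ?thesis by (simp add: andreII.simps)
next
  case False thus ?thesis by (subst andreII.simps) (simp add: wleft_wright_append_Cons[OF d lt])
qed

lemma hd_sort: "xs \<noteq> [] \<Longrightarrow> hd (sort xs) = Min (set xs)"
proof -
  assume "xs \<noteq> []"
  hence ne: "sort xs \<noteq> []" by (metis length_sort length_0_conv)
  have "hd (sort xs) \<le> y" if "y \<in> set xs" for y
  proof -
    have "y \<in> set (sort xs)" using that by simp
    then obtain i where "i < length (sort xs)" "y = sort xs ! i" unfolding in_set_conv_nth by blast
    thus ?thesis using ne by (simp add: hd_conv_nth sorted_nth_mono)
  qed
  moreover have "hd (sort xs) \<in> set xs" using hd_in_set[OF ne] by simp
  ultimately show ?thesis by (intro Min_eqI[symmetric]) auto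
qed

lemma last_sort: "xs \<noteq> [] \<Longrightarrow> last (sort xs) = Max (set xs)"
proof -
  assume "xs \<noteq> []"
  hence ne: "sort xs \<noteq> []" by (metis length_sort length_0_conv)
  have "y \<le> last (sort xs)" if "y \<in> set xs" for y
  proof -
    have "y \<in> set (sort xs)" using that by simp
    then obtain i where "i < length (sort xs)" "y = sort xs ! i" unfolding in_set_conv_nth by blast
    thus ?thesis using ne by (simp add: last_conv_nth sorted_nth_mono)
  qed
  moreover have "last (sort xs) \<in> set xs" using last_in_set[OF ne] by simp
  ultimately show ?thesis by (intro Max_eqI[symmetric]) auto
qed

lemma last_right_split_pattern:
  assumes "distinct (l @ r)"
  shows "last_right (split_pattern l r) \<longleftrightarrow> (l @ r \<noteq> [] \<longrightarrow> Max (set (l @ r)) \<in> set r)"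
proof (cases "l @ r = []")
  case False
  have "Max (set (l @ r)) \<in> set l \<union> set r" using False Max_in[of "set (l @ r)"] by auto
  hence "Max (set (l @ r)) \<in> set r \<longleftrightarrow> Max (set (l @ r)) \<notin> set l" using assms by auto
  moreover have "sort (l @ r) \<noteq> []" using False by (metis length_sort length_0_conv)
  ultimately show ?thesis
    using False by (simp add: last_right_def split_pattern_def last_map last_sort)
qed (simp add: last_right_def split_pattern_def)

lemma first_right_split_pattern:
  assumes "distinct (l @ r)"
  shows "first_right (split_pattern l r) \<longleftrightarrow> (l @ r \<noteq> [] \<longrightarrow> Min (set (l @ r)) \<in> set r)"
proof (cases "l @ r = []")
  case False
  have "Min (set (l @ r)) \<in> set l \<union> set r" using False Min_in[of "set (l @ r)"] by auto
  hence "Min (set (l @ r)) \<in> set r \<longleftrightarrow> Min (set (l @ r)) \<notin> set l" using assms by auto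
  moreover have "sort (l @ r) \<noteq> []" using False by (metis length_sort length_0_conv)
  ultimately show ?thesis
    using False by (simp add: first_right_def split_pattern_def hd_map hd_sort)
qed (simp add: first_right_def split_pattern_def)

section \<open>Restrictions to initial segments of values\<close>

lemma no_double_descent_short [simp]:
  "no_double_descent []" "no_double_descent [x]" "no_double_descent [x, y]"
  by (auto simp: no_double_descent_def)

lemma no_double_descent_Cons3 [simp]:
  "no_double_descent (x # y # z # r) \<longleftrightarrow> \<not> (y < x \<and> z < y) \<and> no_double_descent (y # z # r)"
proof -
  let ?D = "\<lambda>w i. i + 2 < length w \<and> w ! i > w ! (i + 1) \<and> w ! (i + 1) > w ! (i + 2)"
  have "(\<exists>i. ?D (x # y # z # r) i) \<longleftrightarrow> ?D (x # y # z # r) 0 \<or> (\<exists>j. ?D (x # y # z # r) (Suc j))"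
    by (metis not0_implies_Suc)
  moreover have "?D (x # y # z # r) (Suc j) \<longleftrightarrow> ?D (y # z # r) j" for j by simp
  ultimately show ?thesis unfolding no_double_descent_def by simp
qed

definition ends_with_descent :: "nat list \<Rightarrow> bool" where
  "ends_with_descent zs \<longleftrightarrow> 2 \<le> length zs \<and> last zs < last (butlast zs)"

lemma ends_with_descent_short [simp]:
  "\<not> ends_with_descent []" "\<not> ends_with_descent [x]" "ends_with_descent [x, y] \<longleftrightarrow> y < x"
  by (auto simp: ends_with_descent_def)

lemma ends_with_descent_Cons: "2 \<le> length ys \<Longrightarrow> ends_with_descent (x # ys) = ends_with_descent ys"
  by (cases ys) (auto simp: ends_with_descent_def)

lemma no_double_descent_Cons_min:
  "\<forall>y\<in>set ys. m < y \<Longrightarrow> no_double_descent (m # ys) = no_double_descent ys"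
  by (induction ys rule: induct_list012) auto

lemma no_double_descent_append_Cons_min:
  "\<forall>x\<in>set xs \<union> set ys. m < x \<Longrightarrow>
    no_double_descent (xs @ m # ys) \<longleftrightarrow> no_double_descent xs \<and> no_double_descent ys \<and> \<not> ends_with_descent xs"
proof (induction xs rule: induct_list012)
  case (2 x)
  thus ?case by (cases ys) (auto simp: no_double_descent_Cons_min)
next
  case (3 x x' xs)
  have IH: "no_double_descent ((x' # xs) @ m # ys) \<longleftrightarrow>
      no_double_descent (x' # xs) \<and> no_double_descent ys \<and> \<not> ends_with_descent (x' # xs)"
    using 3 by simp
  show ?case
  proof (cases xs)
    case Nil
    thus ?thesis using IH "3.prems" by auto
  next
    case (Cons x'' xs')
    hence "ends_with_descent (x # x' # xs) = ends_with_descent (x' # xs)"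
      by (intro ends_with_descent_Cons) simp
    thus ?thesis using IH Cons by simp
  qed
qed (simp add: no_double_descent_Cons_min)

lemma ends_with_descent_append_Cons_min:
  assumes "\<forall>x\<in>set xs \<union> set ys. m < x"
  shows "ends_with_descent (xs @ m # ys) \<longleftrightarrow> (ys = [] \<and> xs \<noteq> []) \<or> ends_with_descent ys"
proof (cases ys)
  case Nil
  thus ?thesis using assms by (cases xs rule: rev_cases) (auto simp: ends_with_descent_def butlast_append)
next
  case (Cons y ys')
  thus ?thesis using assms by (cases ys') (auto simp: ends_with_descent_def butlast_append)
qed

lemma filter_le_append_Cons_min:
  fixes l r :: "nat list"
  assumes "\<forall>x\<in>set l \<union> set r. m < x"
  shows "filter (\<lambda>x. x \<le> k) (l @ m # r) =
    (if m \<le> k then filter (\<lambda>x. x \<le> k) l @ m # filter (\<lambda>x. x \<le> k) r else [])"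
  using assms by (auto simp: filter_empty_conv dest: bspec)

definition andreII_restricted :: "nat list \<Rightarrow> bool" where
  "andreII_restricted w \<longleftrightarrow>
     (\<forall>k. no_double_descent (filter (\<lambda>x. x \<le> k) w) \<and> \<not> ends_with_descent (filter (\<lambda>x. x \<le> k) w))"

definition simsun_word :: "nat list \<Rightarrow> bool" where
  "simsun_word w \<longleftrightarrow> (w \<noteq> [] \<longrightarrow> last w = Max (set w)) \<and> (\<forall>k. no_double_descent (filter (\<lambda>x. x \<le> k) w))"

lemma andreII_restricted_append_Cons:
  assumes lt: "\<forall>x\<in>set l \<union> set r. m < x"
  shows "andreII_restricted (l @ m # r) \<longleftrightarrow> andreII_restricted l \<and> andreII_restricted r \<and>
    (\<forall>k. filter (\<lambda>x. x \<le> k) l \<noteq> [] \<longrightarrow> filter (\<lambda>x. x \<le> k) r \<noteq> [])"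
proof -
  let ?f = "\<lambda>k. filter (\<lambda>x. x \<le> k)"
  have "(no_double_descent (?f k (l @ m # r)) \<and> \<not> ends_with_descent (?f k (l @ m # r))) \<longleftrightarrow>
      (no_double_descent (?f k l) \<and> \<not> ends_with_descent (?f k l)) \<and>
      (no_double_descent (?f k r) \<and> \<not> ends_with_descent (?f k r)) \<and> (?f k l \<noteq> [] \<longrightarrow> ?f k r \<noteq> [])" for k
  proof (cases "m \<le> k")
    case True
    have "\<forall>x\<in>set (?f k l) \<union> set (?f k r). m < x" using lt by auto
    thus ?thesis using True no_double_descent_append_Cons_min ends_with_descent_append_Cons_min
      by (auto simp: filter_le_append_Cons_min[OF lt])
  next
    case False
    hence "?f k l = []" "?f k r = []" using lt by (auto simp: filter_empty_conv dest: bspec)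
    thus ?thesis using False by (simp add: filter_le_append_Cons_min[OF lt])
  qed
  thus ?thesis unfolding andreII_restricted_def by blast
qed

lemma restrictions_nonempty_iff_Min:
  assumes "distinct (l @ r)"
  shows "(\<forall>k. filter (\<lambda>x. x \<le> k) l \<noteq> [] \<longrightarrow> filter (\<lambda>x. x \<le> k) r \<noteq> []) \<longleftrightarrow>
    (l @ r \<noteq> [] \<longrightarrow> Min (set (l @ r)) \<in> set r)"
proof
  assume A: "\<forall>k. filter (\<lambda>x. x \<le> k) l \<noteq> [] \<longrightarrow> filter (\<lambda>x. x \<le> k) r \<noteq> []"
  show "l @ r \<noteq> [] \<longrightarrow> Min (set (l @ r)) \<in> set r"
  proof
    assume ne: "l @ r \<noteq> []"
    let ?\<mu> = "Min (set (l @ r))"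
    show "?\<mu> \<in> set r"
    proof (rule ccontr)
      assume "?\<mu> \<notin> set r"
      hence "?\<mu> \<in> set l" using ne Min_in[of "set (l @ r)"] by auto
      hence "filter (\<lambda>x. x \<le> ?\<mu>) l \<noteq> []" by (auto simp: filter_empty_conv)
      then obtain y where "y \<in> set r" "y \<le> ?\<mu>" using A by (auto simp: filter_empty_conv)
      moreover have "?\<mu> \<le> y" using \<open>y \<in> set r\<close> by simp
      ultimately show False using \<open>?\<mu> \<notin> set r\<close> by (metis antisym)
    qed
  qed
next
  assume B: "l @ r \<noteq> [] \<longrightarrow> Min (set (l @ r)) \<in> set r"
  show "\<forall>k. filter (\<lambda>x. x \<le> k) l \<noteq> [] \<longrightarrow> filter (\<lambda>x. x \<le> k) r \<noteq> []"
  proof (intro allI impI)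
    fix k assume "filter (\<lambda>x. x \<le> k) l \<noteq> []"
    then obtain x where x: "x \<in> set l" "x \<le> k" by (auto simp: filter_empty_conv)
    hence "Min (set (l @ r)) \<in> set r" "Min (set (l @ r)) \<le> k"
      using B by (auto intro: order_trans[OF Min_le])
    thus "filter (\<lambda>x. x \<le> k) r \<noteq> []" by (auto simp: filter_empty_conv)
  qed
qed

lemma andreII_iff_restricted: "distinct w \<Longrightarrow> andreII w \<longleftrightarrow> andreII_restricted w"
proof (induction w rule: Psi.induct)
  case (1 w)
  show ?case
  proof (cases "w = []")
    case True thus ?thesis by (simp add: andreII_restricted_def andreII.simps)
  next
    case False
    let ?l = "wleft w" and ?r = "wright w" and ?m = "Min (set w)"
    have w: "w = ?l @ ?m # ?r" by (rule word_split_Min[OF False])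
    have d: "distinct (?l @ ?m # ?r)" using "1.prems" w by metis
    have lt: "\<forall>x\<in>set ?l \<union> set ?r. ?m < x" by (rule word_split_Min_less[OF "1.prems" False])
    have "andreII ?l \<longleftrightarrow> andreII_restricted ?l" "andreII ?r \<longleftrightarrow> andreII_restricted ?r"
      using 1 False d by auto
    moreover have "distinct (?l @ ?r)" using d by simp
    ultimately show ?thesis
      using andreII_append_Cons[OF d lt] andreII_restricted_append_Cons[OF lt]
        restrictions_nonempty_iff_Min[of ?l ?r] w by metis
  qed
qed

lemma last_Max_append_Cons:
  assumes d: "distinct (l @ m # r)" and lt: "\<forall>x\<in>set l \<union> set r. m < x"
  shows "last (l @ m # r) = Max (set (l @ m # r)) \<longleftrightarrow>
    (r \<noteq> [] \<longrightarrow> last r = Max (set r)) \<and> (l @ r \<noteq> [] \<longrightarrow> Max (set (l @ r)) \<in> set r)"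
proof (cases "l @ r = []")
  case False
  let ?M = "Max (set (l @ r))"
  have "?M \<in> set l \<union> set r" using False Max_in[of "set (l @ r)"] by auto
  hence mM: "m < ?M" using lt by blast
  have M: "Max (set (l @ m # r)) = ?M"
  proof -
    have "set (l @ m # r) = insert m (set (l @ r))" by auto
    thus ?thesis using False mM by (simp add: Max_insert)
  qed
  show ?thesis
  proof (cases "r = []")
    case True
    thus ?thesis using M mM False by auto
  next
    case False
    have rM: "Max (set r) \<le> ?M" using False by (intro Max_mono) auto
    have "last r = ?M \<longleftrightarrow> last r = Max (set r) \<and> ?M \<in> set r"
    proof
      assume e: "last r = ?M"
      hence "?M \<in> set r" using last_in_set[OF False] by simp
      thus "last r = Max (set r) \<and> ?M \<in> set r" using e rM by (simp add: antisym)
    next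
      assume "last r = Max (set r) \<and> ?M \<in> set r"
      thus "last r = ?M" using rM by (simp add: antisym)
    qed
    thus ?thesis using M False by simp
  qed
qed simp

lemma simsun_word_append_Cons:
  assumes d: "distinct (l @ m # r)" and lt: "\<forall>x\<in>set l \<union> set r. m < x"
  shows "simsun_word (l @ m # r) \<longleftrightarrow>
    andreII_restricted l \<and> simsun_word r \<and> (l @ r \<noteq> [] \<longrightarrow> Max (set (l @ r)) \<in> set r)"
proof -
  let ?f = "\<lambda>k. filter (\<lambda>x. x \<le> k)"
  have "no_double_descent (?f k (l @ m # r)) \<longleftrightarrow>
      (no_double_descent (?f k l) \<and> \<not> ends_with_descent (?f k l)) \<and> no_double_descent (?f k r)" for k
  proof (cases "m \<le> k")
    case True
    have "\<forall>x\<in>set (?f k l) \<union> set (?f k r). m < x" using lt by auto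
    thus ?thesis using True no_double_descent_append_Cons_min
      by (auto simp: filter_le_append_Cons_min[OF lt])
  next
    case False
    hence "?f k l = []" "?f k r = []" using lt by (auto simp: filter_empty_conv dest: bspec)
    thus ?thesis using False by (simp add: filter_le_append_Cons_min[OF lt])
  qed
  hence "(\<forall>k. no_double_descent (?f k (l @ m # r))) \<longleftrightarrow>
      andreII_restricted l \<and> (\<forall>k. no_double_descent (?f k r))"
    unfolding andreII_restricted_def by blast
  thus ?thesis unfolding simsun_word_def using last_Max_append_Cons[OF d lt] by auto
qed

section \<open>Inverse words of words of a given shape\<close>

definition words_of :: "(nat list \<Rightarrow> bool) \<Rightarrow> nat set \<Rightarrow> unit tree \<Rightarrow> nat list set" where
  "words_of X V T = {w. distinct w \<and> set w = V \<and> X w \<and> shape (Psi w) = T}"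

lemma split_pattern_realizes:
  assumes W: "finite W" "card W = a + b" and P: "P \<in> shuffle_patterns a b"
  obtains A where "A \<subseteq> W" "card A = a" "card (W - A) = b"
    "\<And>l r. distinct (l @ r) \<Longrightarrow> set l = A \<Longrightarrow> set r = W - A \<Longrightarrow> split_pattern l r = P"
proof -
  define ws where "ws = sorted_list_of_set W"
  define A where "A = set (map fst (filter snd (zip ws P)))"
  have ws: "distinct ws" "set ws = W" "length ws = length P"
    using W P by (auto simp: ws_def shuffle_patterns_def)
  have mem: "ws ! j \<in> A \<longleftrightarrow> P ! j" if "j < length ws" for j
  proof
    assume "ws ! j \<in> A"
    then obtain i where "i < length ws" "P ! i" "ws ! i = ws ! j" using ws(3) by (auto simp: A_def set_zip)
    thus "P ! j" using ws(1) that nth_eq_iff_index_eq by metis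
  qed (use that ws(3) in \<open>force simp: A_def set_zip\<close>)
  have AW: "A \<subseteq> W" using ws(2) by (auto simp: A_def dest: set_zip_leftD)
  have "distinct (map fst (filter snd (zip ws P)))"
    using ws by (intro distinct_map_filter) simp
  hence "card A = length (filter snd (zip ws P))" unfolding A_def by (metis distinct_card length_map)
  also have "\<dots> = count_list P True" using ws(3) by (induction ws P rule: list_induct2) auto
  finally have cA: "card A = a" using P by (simp add: shuffle_patterns_def)
  have "split_pattern l r = P" if "distinct (l @ r)" "set l = A" "set r = W - A" for l r
  proof -
    have "set (l @ r) = W" using that AW by auto
    hence "sort (l @ r) = ws" using that(1) by (simp add: ws_def sort_distinct)
    thus ?thesis unfolding split_pattern_def using mem ws(3) that(2)
      by (intro nth_equalityI) auto
  qed
  moreover have "card (W - A) = b" using W AW cA finite_subset[OF AW] by (simp add: card_Diff_subset)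
  ultimately show ?thesis using that AW cA by blast
qed

lemma inverse_words_subset_graft:
  assumes HL: "\<And>A. finite A \<Longrightarrow> card A = size L \<Longrightarrow> inverse_word ` words_of XL A L \<subseteq> EL"
    and HR: "\<And>B. finite B \<Longrightarrow> card B = size R \<Longrightarrow> inverse_word ` words_of XR B R \<subseteq> ER"
    and X: "\<And>l m r. distinct (l @ m # r) \<Longrightarrow> \<forall>x\<in>set l \<union> set r. m < x \<Longrightarrow>
      X (l @ m # r) \<Longrightarrow> XL l \<and> XR r \<and> C (split_pattern l r)"
  shows "inverse_word ` words_of X V (Node L x R) \<subseteq> graft C EL ER (size L) (size R)"
proof clarify
  fix w assume w: "w \<in> words_of X V (Node L x R)"
  hence dw: "distinct w" and Xw: "X w" and shw: "shape (Psi w) = Node L x R"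
    by (auto simp: words_of_def)
  have ne: "w \<noteq> []" using shw shape_Psi_eq_Leaf[of w] by auto
  define l r m where "l = wleft w" and "r = wright w" and "m = Min (set w)"
  have ws: "w = l @ m # r" using word_split_Min[OF ne] by (simp add: l_def r_def m_def)
  have d: "distinct (l @ m # r)" using dw ws by simp
  have lt: "\<forall>x\<in>set l \<union> set r. m < x" using word_split_Min_less[OF dw ne] by (simp add: l_def r_def m_def)
  have sh: "shape (Psi l) = L" "shape (Psi r) = R"
    using shw shape_Psi_Cons[OF ne] by (auto simp: l_def r_def)
  hence len: "length l = size L" "length r = size R" using size_shape_Psi by metis+
  have XLR: "XL l" "XR r" "C (split_pattern l r)" using X[OF d lt] Xw ws by auto
  have "inverse_word l \<in> EL" using HL[of "set l"] d len sh XLR by (auto simp: words_of_def distinct_card)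
  moreover have "inverse_word r \<in> ER" using HR[of "set r"] d len sh XLR by (auto simp: words_of_def distinct_card)
  moreover have "split_pattern l r \<in> shuffle_patterns (size L) (size R)"
    using split_pattern_shuffle_patterns[of l r] d len by simp
  ultimately show "inverse_word w \<in> graft C EL ER (size L) (size R)"
    unfolding graft_def ws inverse_word_split[OF d lt] len(1) using XLR(3)
    by (intro image_eqI[where x = "(inverse_word l, inverse_word r, split_pattern l r)"]) auto
qed

lemma graft_subset_inverse_words:
  assumes HL: "\<And>A. finite A \<Longrightarrow> card A = size L \<Longrightarrow> EL \<subseteq> inverse_word ` words_of XL A L"
    and HR: "\<And>B. finite B \<Longrightarrow> card B = size R \<Longrightarrow> ER \<subseteq> inverse_word ` words_of XR B R"
    and X: "\<And>l m r. distinct (l @ m # r) \<Longrightarrow> \<forall>x\<in>set l \<union> set r. m < x \<Longrightarrow>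
      XL l \<Longrightarrow> XR r \<Longrightarrow> C (split_pattern l r) \<Longrightarrow> X (l @ m # r)"
    and V: "finite V" "card V = size (Node L x R)"
  shows "graft C EL ER (size L) (size R) \<subseteq> inverse_word ` words_of X V (Node L x R)"
proof (unfold graft_def, rule image_subsetI)
  fix t assume "t \<in> EL \<times> ER \<times> {P \<in> shuffle_patterns (size L) (size R). C P}"
  then obtain u v P where t: "t = (u, v, P)" and u: "u \<in> EL" and v: "v \<in> ER"
    and P: "P \<in> shuffle_patterns (size L) (size R)" and CP: "C P" by auto
  define m where "m = Min V"
  have "V \<noteq> {}" using V by auto
  hence mV: "m \<in> V" "\<forall>y\<in>V - {m}. m < y"
    using V(1) Min_le[OF V(1)] by (auto simp: m_def order.order_iff_strict)
  have W: "finite (V - {m})" "card (V - {m}) = size L + size R" using V mV by auto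
  obtain A where A: "A \<subseteq> V - {m}" "card A = size L" "card (V - {m} - A) = size R"
    and pat: "\<And>l r. distinct (l @ r) \<Longrightarrow> set l = A \<Longrightarrow> set r = V - {m} - A \<Longrightarrow> split_pattern l r = P"
    using split_pattern_realizes[OF W P] by blast
  obtain l where l: "l \<in> words_of XL A L" "u = inverse_word l"
    using HL[OF finite_subset[OF A(1) W(1)] A(2)] u by blast
  obtain r where r: "r \<in> words_of XR (V - {m} - A) R" "v = inverse_word r"
    using HR[OF _ A(3)] W(1) v by blast
  have l': "distinct l" "set l = A" "XL l" "shape (Psi l) = L" and r': "distinct r" "set r = V - {m} - A" "XR r" "shape (Psi r) = R"
    using l(1) r(1) by (auto simp: words_of_def)
  have d: "distinct (l @ m # r)" and lt: "\<forall>x\<in>set l \<union> set r. m < x"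
    using l' r' A(1) mV by auto
  have "l @ m # r \<in> words_of X V (Node L x R)"
    using d l' r' A(1) mV X[OF d lt] pat[of l r] CP shape_Psi_Cons[of "l @ m # r"] wleft_wright_append_Cons[OF d lt]
    by (auto simp: words_of_def)
  moreover have "size L # interleave P u (map (\<lambda>x. x + Suc (size L)) v) = inverse_word (l @ m # r)"
    using inverse_word_split[OF d lt] l(2) r(2) l'(4) size_shape_Psi[of l] pat[of l r] d l' r' by auto
  ultimately show "(\<lambda>(u, v, P). size L # interleave P u (map (\<lambda>x. x + Suc (size L)) v)) t
      \<in> inverse_word ` words_of X V (Node L x R)"
    unfolding t by auto
qed

lemma inverse_words_Node:
  assumes HL: "\<And>A. finite A \<Longrightarrow> card A = size L \<Longrightarrow> inverse_word ` words_of XL A L = EL"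
    and HR: "\<And>B. finite B \<Longrightarrow> card B = size R \<Longrightarrow> inverse_word ` words_of XR B R = ER"
    and X: "\<And>l m r. distinct (l @ m # r) \<Longrightarrow> \<forall>x\<in>set l \<union> set r. m < x \<Longrightarrow>
      X (l @ m # r) \<longleftrightarrow> XL l \<and> XR r \<and> C (split_pattern l r)"
    and V: "finite V" "card V = size (Node L x R)"
  shows "inverse_word ` words_of X V (Node L x R) = graft C EL ER (size L) (size R)"
proof (rule equalityI)
  show "inverse_word ` words_of X V (Node L x R) \<subseteq> graft C EL ER (size L) (size R)"
    by (rule inverse_words_subset_graft[where XL = XL and XR = XR]) (simp_all add: HL HR X)
  show "graft C EL ER (size L) (size R) \<subseteq> inverse_word ` words_of X V (Node L x R)"
    by (rule graft_subset_inverse_words[where XL = XL and XR = XR]) (simp_all add: HL HR X V)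
qed

lemma inverse_words_Leaf:
  assumes "X []" "finite V" "card V = 0"
  shows "inverse_word ` words_of X V Leaf = {[]}"
proof -
  have "V = {}" using assms(2,3) by simp
  have "w \<in> words_of X V Leaf \<longleftrightarrow> w = []" for w
    using shape_Psi_eq_Leaf[of w] assms(1) \<open>V = {}\<close> by (auto simp: words_of_def)
  hence "words_of X V Leaf = {[]}" by blast
  thus ?thesis by (simp add: inverse_word_def)
qed

lemma inverse_words_inv_words:
  assumes "X []"
    and "\<And>l m r. distinct (l @ m # r) \<Longrightarrow> \<forall>x\<in>set l \<union> set r. m < x \<Longrightarrow>
      X (l @ m # r) \<longleftrightarrow> X l \<and> X r \<and> C (split_pattern l r)"
  shows "finite V \<Longrightarrow> card V = size T \<Longrightarrow> inverse_word ` words_of X V T = inv_words C T"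
proof (induction T arbitrary: V)
  case (Node L x R)
  have "inverse_word ` words_of X V (Node L x R) = graft C (inv_words C L) (inv_words C R) (size L) (size R)"
    by (rule inverse_words_Node[OF Node.IH assms(2) Node.prems])
  thus ?case by simp
next
  case Leaf
  thus ?case using inverse_words_Leaf[where X = X, OF assms(1)] by simp
qed

lemma inverse_words_andreI:
  "finite V \<Longrightarrow> card V = size T \<Longrightarrow> inverse_word ` words_of andreI V T = inv_words last_right T"
proof (rule inverse_words_inv_words)
  show "andreI []" by (subst andreI.simps) simp
  fix l r :: "nat list" and m assume d: "distinct (l @ m # r)" and lt: "\<forall>x\<in>set l \<union> set r. m < x"
  have "distinct (l @ r)" using d by simp
  thus "andreI (l @ m # r) \<longleftrightarrow> andreI l \<and> andreI r \<and> last_right (split_pattern l r)"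
    using andreI_append_Cons[OF d lt] last_right_split_pattern by simp
qed

lemma inverse_words_andreII:
  "finite V \<Longrightarrow> card V = size T \<Longrightarrow> inverse_word ` words_of andreII V T = inv_words first_right T"
proof (rule inverse_words_inv_words)
  show "andreII []" by (subst andreII.simps) simp
  fix l r :: "nat list" and m assume d: "distinct (l @ m # r)" and lt: "\<forall>x\<in>set l \<union> set r. m < x"
  have "distinct (l @ r)" using d by simp
  thus "andreII (l @ m # r) \<longleftrightarrow> andreII l \<and> andreII r \<and> first_right (split_pattern l r)"
    using andreII_append_Cons[OF d lt] first_right_split_pattern by simp
qed

lemma inverse_words_simsun_word:
  "finite V \<Longrightarrow> card V = size T \<Longrightarrow> inverse_word ` words_of simsun_word V T = inv_words_simsun T"
proof (induction T arbitrary: V)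
  case (Node L x R)
  have split: "simsun_word (l @ m # r) \<longleftrightarrow> andreII l \<and> simsun_word r \<and> last_right (split_pattern l r)"
    if d: "distinct (l @ m # r)" and lt: "\<forall>x\<in>set l \<union> set r. m < x" for l r :: "nat list" and m
  proof -
    have "distinct l" "distinct (l @ r)" using d by auto
    thus ?thesis using simsun_word_append_Cons[OF d lt] andreII_iff_restricted[of l] last_right_split_pattern[of l r]
      by simp
  qed
  have "inverse_word ` words_of simsun_word V (Node L x R) =
      graft last_right (inv_words first_right L) (inv_words_simsun R) (size L) (size R)"
    by (rule inverse_words_Node[OF inverse_words_andreII Node.IH(2) split Node.prems])
  thus ?case by simp
next
  case Leaf
  have "simsun_word []" by (simp add: simsun_word_def)
  thus ?case using inverse_words_Leaf[where X = simsun_word] Leaf by simp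
qed

lemma count_adj_upt: "count_adj c [a..<b] = card {i. a \<le> i \<and> Suc i < b \<and> c i (Suc i)}"
proof (induction b)
  case (Suc b)
  show ?case
  proof (cases "a < b")
    case True
    then obtain b' where b: "b = Suc b'" by (cases b) auto
    let ?S = "{i. a \<le> i \<and> Suc i < b \<and> c i (Suc i)}"
    have "{i. a \<le> i \<and> Suc i < Suc b \<and> c i (Suc i)} = ?S \<union> {i. i = b' \<and> c b' b}"
      using True b by (auto simp: less_Suc_eq)
    moreover have "finite ?S" "b' \<notin> ?S" using b by auto
    ultimately have "card {i. a \<le> i \<and> Suc i < Suc b \<and> c i (Suc i)} = card ?S + (if c b' b then 1 else 0)"
      by (cases "c b' b") auto
    moreover have "count_adj c [a..<Suc b] = count_adj c [a..<b] + (if c b' b then 1 else 0)"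
      using True b by (simp add: count_adj_append last_upt)
    ultimately show ?thesis using Suc.IH by simp
  next
    case False
    hence "{i. a \<le> i \<and> Suc i < Suc b \<and> c i (Suc i)} = {}" by auto
    moreover have "count_adj c [a..<Suc b] = 0" using False by (cases "a = b") auto
    ultimately show ?thesis by simp
  qed
qed simp

lemma ides_des_inverse_word:
  assumes w: "w \<in> perms n"
  shows "ides n w = des (inverse_word w)"
proof -
  have "sort w = [1..<Suc n]"
    using w by (simp add: perms_def sort_distinct atLeastLessThanSuc_atLeastAtMost[symmetric])
  hence "des (inverse_word w) = card {i. 1 \<le> i \<and> Suc i < Suc n \<and> pos w (Suc i) < pos w i}"
    unfolding inverse_word_def des_def count_adj_map by (simp only: count_adj_upt)
  also have "{i. 1 \<le> i \<and> Suc i < Suc n \<and> pos w (Suc i) < pos w i} = {i \<in> {1..<n}. pos w (i + 1) < pos w i}"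
    by auto
  finally show ?thesis by (simp add: ides_def)
qed

lemma simsun_iff_simsun_word:
  assumes w: "w \<in> perms n" and n: "1 \<le> n"
  shows "simsun n w \<longleftrightarrow> simsun_word w"
proof -
  have d: "distinct w" and s: "set w = {1..n}" using w by (auto simp: perms_def)
  hence len: "length w = n" by (metis card_atLeastAtMost diff_Suc_1 distinct_card)
  hence "w \<noteq> []" using n by auto
  hence last: "w ! (n - 1) = last w" using len by (simp add: last_conv_nth)
  have Max: "Max (set w) = n" unfolding s using n by (intro Max_eqI) auto
  have "(\<forall>k\<in>{1..n}. no_double_descent (filter (\<lambda>x. x \<le> k) w)) \<longleftrightarrow>
      (\<forall>k. no_double_descent (filter (\<lambda>x. x \<le> k) w))"
  proof
    assume A: "\<forall>k\<in>{1..n}. no_double_descent (filter (\<lambda>x. x \<le> k) w)"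
    show "\<forall>k. no_double_descent (filter (\<lambda>x. x \<le> k) w)"
    proof
      fix k
      show "no_double_descent (filter (\<lambda>x. x \<le> k) w)"
      proof (cases "k = 0")
        case True
        hence "filter (\<lambda>x. x \<le> k) w = []" using s by (auto simp: filter_empty_conv)
        thus ?thesis by simp
      next
        case False
        have eq: "filter (\<lambda>x. x \<le> k) w = filter (\<lambda>x. x \<le> min k n) w" using s by (intro filter_cong) auto
        have "min k n \<in> {1..n}" using False n by auto
        thus ?thesis unfolding eq using A by blast
      qed
    qed
  qed simp
  thus ?thesis unfolding simsun_def simsun_word_def using w last Max \<open>w \<noteq> []\<close> by simp
qed

lemma sum_ides_words_of:
  fixes s :: "'a :: comm_semiring_1"
  shows "(\<Sum>\<sigma>\<in>words_of X {1..n} T. s ^ ides n \<sigma>) = (\<Sum>t\<in>inverse_word ` words_of X {1..n} T. s ^ des t)"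
proof -
  have "inj_on inverse_word (words_of X {1..n} T)"
    by (rule inj_onI) (auto simp: words_of_def intro: inverse_word_inj)
  moreover have "ides n \<sigma> = des (inverse_word \<sigma>)" if "\<sigma> \<in> words_of X {1..n} T" for \<sigma>
    using that by (intro ides_des_inverse_word) (simp add: words_of_def perms_def)
  ultimately show ?thesis by (simp add: sum.reindex)
qed

theorem theorem2p5:
  fixes n :: nat and T :: "unit tree" and s :: "'a :: comm_semiring_1"
  assumes "n \<ge> 1" and "T \<in> URL n"
  shows "(\<Sum>\<sigma>\<in>AndI n T. s ^ ides n \<sigma>) = (\<Sum>\<sigma>\<in>AndII n T. s ^ ides n \<sigma>) \<and>
         (\<Sum>\<sigma>\<in>AndII n T. s ^ ides n \<sigma>) = (\<Sum>\<sigma>\<in>RS n T. s ^ ides n \<sigma>)"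
proof -
  have V: "finite {1..n}" "card {1..n} = size T" using assms(2) by (simp_all add: URL_def)
  have "AndI n T = words_of andreI {1..n} T" "AndII n T = words_of andreII {1..n} T"
    "RS n T = words_of simsun_word {1..n} T"
    using simsun_iff_simsun_word[OF _ assms(1)]
    by (auto simp: AndI_def AndII_def RS_def words_of_def perms_def)
  hence "(\<Sum>\<sigma>\<in>AndI n T. s ^ ides n \<sigma>) = (\<Sum>t\<in>inv_words last_right T. s ^ des t)"
    "(\<Sum>\<sigma>\<in>AndII n T. s ^ ides n \<sigma>) = (\<Sum>t\<in>inv_words first_right T. s ^ des t)"
    "(\<Sum>\<sigma>\<in>RS n T. s ^ ides n \<sigma>) = (\<Sum>t\<in>inv_words_simsun T. s ^ des t)"
    by (simp_all only: sum_ides_words_of inverse_words_andreI[OF V] inverse_words_andreII[OF V]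
        inverse_words_simsun_word[OF V])
  thus ?thesis using sum_des_inv_words[where f = "\<lambda>d. s ^ d" and T = T] by simp
qed

end
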